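(* The unique minimizer $u_{\min}$ of $J$ over $H^1_{\overline g}(\Omega)$ satisfies: $b(x,u_{\min}+w)v\in L^1(\Omega)$ for all $v\in\mathcal W$ and $$\int_\Omega\epsilon\nabla u_{\min}\cdot\nabla v\,dx+\int_\Omega b(x,u_{\min}+w)v\,dx=\int_\Omega\bm f\cdot\nabla v\,dx\quad\text{for all }v\in\mathcal W,$$ both for $\mathcal W=C_c^\infty(\Omega)$ and for $\mathcal W=H^1_0(\Omega)\cap L^\infty(\Omega)$.
   Context: Let $d\in\{2,3\}$, $\Omega\subset\mathbb R^d$ a bounded open set with Lipschitz boundary, $\Omega_m$ open with $\overline{\Omega_m}\subset\Omega$ and $\Gamma=\partial\Omega_m$ of class $C^1$, $\Omega_s:=\Omega\setminus\overline{\Omega_m}$, $\Omega_{ions}\subset\Omega_s$ open. Permittivity: $\epsilon=\epsilon_m>0$ constant on $\Omega_m$, $\epsilon=\epsilon_s$ on $\Omega_s$ with $\epsilon_s\in C^{0,1}(\overline{\Omega_s})$ bounded below by a positive constant. $g_\Omega\in C^{0,1}(\partial\Omega)$. Constants $e_0,k_B,T>0$; points $x_1,\dots,x_{N_m}\in\Omega_m$, reals $z_i$; for $j=1,\dots,N_{ions}$, $M_j>0$, nonzero reals $\xi_j$; $\overline M_j:=M_j\chi_{\Omega_{ions}}$. $b(x,t):=-\frac{4\pi e_0^2}{k_BT}\sum_j\overline M_j(x)\xi_je^{-\xi_jt}$, $B(x,t):=\frac{4\pi e_0^2}{k_BT}\sum_j\overline M_j(x)e^{-\xi_jt}$. $G(x)=-\frac{2e_0^2}{\epsilon_mk_BT}\sum_iz_i\ln|x-x_i|$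 ($d=2$), $G(x)=\frac{e_0^2}{\epsilon_mk_BT}\sum_i\frac{z_i}{|x-x_i|}$ ($d=3$). $u^H\in H^1(\Omega)$ equals $-G$ on $\Omega_s$, has trace $-G$ on $\Gamma$ from $\Omega_m$, and $\int_{\Omega_m}\nabla u^H\cdot\nabla v\,dx=0$ for all $v\in H^1_0(\Omega_m)$. $(w,\bm f,\overline g)$ is either $(G,\ \chi_{\Omega_s}(\epsilon_m-\epsilon_s)\nabla G,\ g_\Omega-G)$ (2-term splitting) or $(0,\ -\chi_{\Omega_m}\epsilon_m\nabla u^H+\chi_{\Omega_s}\epsilon_m\nabla G,\ g_\Omega)$ (3-term splitting). $H^1_{\overline g}(\Omega)$: $v\in H^1(\Omega)$ with trace $\overline g$. $J(v):=\frac12\int_\Omega\epsilon|\nabla v|^2+\int_\Omega B(x,v+w)-\int_\Omega\bm f\cdot\nabla v$ if $B(\cdot,v+w)\in L^1(\Omega)$, $+\infty$ otherwise; $J$ has a unique minimizer $u_{\min}$ over $H^1_{\overline g}(\Omega)$. *)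

theory Defs
  imports "HOL-Analysis.Analysis"
begin

definition cgrad :: "('a::euclidean_space \<Rightarrow> real) \<Rightarrow> 'a \<Rightarrow> 'a" where
  "cgrad f x = (\<Sum>b\<in>Basis. frechet_derivative f (at x) b *\<^sub>R b)"

fun Ck :: "nat \<Rightarrow> ('a::euclidean_space \<Rightarrow> real) set" where
  "Ck 0 = {f. continuous_on UNIV f}"
| "Ck (Suc n) = {f. (\<forall>x. f differentiable (at x)) \<and>
       (\<forall>b\<in>Basis. (\<lambda>x. frechet_derivative f (at x) b) \<in> Ck n)}"

definition smooth_fun :: "('a::euclidean_space \<Rightarrow> real) \<Rightarrow> bool" where
  "smooth_fun f \<longleftrightarrow> (\<forall>n. f \<in> Ck n)"

definition tsupport :: "('a::euclidean_space \<Rightarrow> real) \<Rightarrow> 'a set" where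
  "tsupport f = closure {x. f x \<noteq> 0}"

definition test_fun :: "'a::euclidean_space set \<Rightarrow> ('a \<Rightarrow> real) \<Rightarrow> bool" where
  "test_fun \<Omega> \<phi> \<longleftrightarrow> smooth_fun \<phi> \<and> compact (tsupport \<phi>) \<and> tsupport \<phi> \<subseteq> \<Omega>"

definition L2_on :: "'a::euclidean_space set \<Rightarrow> ('a \<Rightarrow> real) \<Rightarrow> bool" where
  "L2_on \<Omega> v \<longleftrightarrow> v \<in> borel_measurable lebesgue \<and> set_integrable lebesgue \<Omega> (\<lambda>x. (v x)\<^sup>2)"

definition L2v_on :: "'a::euclidean_space set \<Rightarrow> ('a \<Rightarrow> 'a) \<Rightarrow> bool" where
  "L2v_on \<Omega> F \<longleftrightarrow> F \<in> borel_measurable lebesgue \<and> set_integrable lebesgue \<Omega> (\<lambda>x. (norm (F x))\<^sup>2)"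

definition weak_grad :: "'a::euclidean_space set \<Rightarrow> ('a \<Rightarrow> real) \<Rightarrow> ('a \<Rightarrow> 'a) \<Rightarrow> bool" where
  "weak_grad \<Omega> v Dv \<longleftrightarrow>
     (\<forall>\<phi>. test_fun \<Omega> \<phi> \<longrightarrow> (\<forall>b\<in>Basis.
        (LINT x:\<Omega>|lebesgue. v x * frechet_derivative \<phi> (at x) b)
          = - (LINT x:\<Omega>|lebesgue. (Dv x \<bullet> b) * \<phi> x)))"

definition H1_grad :: "'a::euclidean_space set \<Rightarrow> ('a \<Rightarrow> real) \<Rightarrow> ('a \<Rightarrow> 'a) \<Rightarrow> bool" where
  "H1_grad \<Omega> v Dv \<longleftrightarrow> L2_on \<Omega> v \<and> L2v_on \<Omega> Dv \<and> weak_grad \<Omega> v Dv"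

definition H1 :: "'a::euclidean_space set \<Rightarrow> ('a \<Rightarrow> real) \<Rightarrow> bool" where
  "H1 \<Omega> v \<longleftrightarrow> (\<exists>Dv. H1_grad \<Omega> v Dv)"

definition H10_grad :: "'a::euclidean_space set \<Rightarrow> ('a \<Rightarrow> real) \<Rightarrow> ('a \<Rightarrow> 'a) \<Rightarrow> bool" where
  "H10_grad \<Omega> v Dv \<longleftrightarrow> H1_grad \<Omega> v Dv \<and>
     (\<exists>\<phi> :: nat \<Rightarrow> 'a \<Rightarrow> real. (\<forall>n. test_fun \<Omega> (\<phi> n)) \<and>
        (\<lambda>n. LINT x:\<Omega>|lebesgue. (v x - \<phi> n x)\<^sup>2 + (norm (Dv x - cgrad (\<phi> n) x))\<^sup>2)
          \<longlonglongrightarrow> 0)"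

definition H10 :: "'a::euclidean_space set \<Rightarrow> ('a \<Rightarrow> real) \<Rightarrow> bool" where
  "H10 \<Omega> v \<longleftrightarrow> (\<exists>Dv. H10_grad \<Omega> v Dv)"

text \<open>Trace: v (an H^1(Omega) function) has boundary trace g on the boundary of Omega iff
  v - h lies in H^1_0(Omega) for some h in H^1(Omega) continuous on the closure with h = g on
  the boundary (for Lipschitz domains, H^1_0 is the kernel of the trace operator and the trace of
  an H^1 function continuous up to the boundary is its boundary restriction).\<close>
definition has_trace :: "'a::euclidean_space set \<Rightarrow> ('a \<Rightarrow> real) \<Rightarrow> ('a \<Rightarrow> real) \<Rightarrow> bool" where
  "has_trace \<Omega> v g \<longleftrightarrow> H1 \<Omega> v \<and>
     (\<exists>h. H1 \<Omega> h \<and> continuous_on (closure \<Omega>) h \<and> (\<forall>x\<in>frontier \<Omega>. h x = g x) \<and>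
          H10 \<Omega> (\<lambda>x. v x - h x))"

definition Linf_on :: "'a::euclidean_space set \<Rightarrow> ('a \<Rightarrow> real) \<Rightarrow> bool" where
  "Linf_on \<Omega> v \<longleftrightarrow> v \<in> borel_measurable lebesgue \<and>
     (\<exists>C. AE x in lebesgue. x \<in> \<Omega> \<longrightarrow> \<bar>v x\<bar> \<le> C)"

definition lipschitz_boundary :: "'a::euclidean_space set \<Rightarrow> bool" where
  "lipschitz_boundary \<Omega> \<longleftrightarrow> (\<forall>x\<in>frontier \<Omega>. \<exists>r>0. \<exists>e. norm e = 1 \<and>
     (\<exists>\<gamma> :: 'a \<Rightarrow> real. (\<exists>L. L-lipschitz_on UNIV \<gamma>) \<and>
        \<Omega> \<inter> ball x r = {y \<in> ball x r. y \<bullet> e < \<gamma> (y - (y \<bullet> e) *\<^sub>R e)}))"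

definition C1_boundary :: "'a::euclidean_space set \<Rightarrow> bool" where
  "C1_boundary \<Omega> \<longleftrightarrow> (\<forall>x\<in>frontier \<Omega>. \<exists>r>0. \<exists>e. norm e = 1 \<and>
     (\<exists>\<gamma> :: 'a \<Rightarrow> real. (\<exists>D. (\<forall>z. (\<gamma> has_derivative (\<lambda>h. D z \<bullet> h)) (at z)) \<and> continuous_on UNIV D) \<and>
        \<Omega> \<inter> ball x r = {y \<in> ball x r. y \<bullet> e < \<gamma> (y - (y \<bullet> e) *\<^sub>R e)}))"

definition Bfun :: "real \<Rightarrow> real \<Rightarrow> real \<Rightarrow> nat \<Rightarrow> (nat \<Rightarrow> real) \<Rightarrow> (nat \<Rightarrow> real) \<Rightarrow> 'a set \<Rightarrow> 'a \<Rightarrow> real \<Rightarrow> real" where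
  "Bfun e0 kB T Nions M \<xi> Oions x t =
     4 * pi * e0\<^sup>2 / (kB * T) * (\<Sum>j<Nions. M j * indicator Oions x * exp (- \<xi> j * t))"

definition bfun :: "real \<Rightarrow> real \<Rightarrow> real \<Rightarrow> nat \<Rightarrow> (nat \<Rightarrow> real) \<Rightarrow> (nat \<Rightarrow> real) \<Rightarrow> 'a set \<Rightarrow> 'a \<Rightarrow> real \<Rightarrow> real" where
  "bfun e0 kB T Nions M \<xi> Oions x t =
     - 4 * pi * e0\<^sup>2 / (kB * T) * (\<Sum>j<Nions. M j * indicator Oions x * \<xi> j * exp (- \<xi> j * t))"

definition Gpot :: "real \<Rightarrow> real \<Rightarrow> real \<Rightarrow> real \<Rightarrow> nat \<Rightarrow> (nat \<Rightarrow> 'a::euclidean_space) \<Rightarrow> (nat \<Rightarrow> real) \<Rightarrow> 'a \<Rightarrow> real" where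
  "Gpot e0 kB T epsm Nm xs z x =
     (if DIM('a) = 2
      then - 2 * e0\<^sup>2 / (epsm * kB * T) * (\<Sum>i<Nm. z i * ln (norm (x - xs i)))
      else e0\<^sup>2 / (epsm * kB * T) * (\<Sum>i<Nm. z i / norm (x - xs i)))"

definition Jfun :: "'a::euclidean_space set \<Rightarrow> ('a \<Rightarrow> real) \<Rightarrow> ('a \<Rightarrow> real \<Rightarrow> real) \<Rightarrow> ('a \<Rightarrow> real)
    \<Rightarrow> ('a \<Rightarrow> 'a) \<Rightarrow> ('a \<Rightarrow> real) \<Rightarrow> ('a \<Rightarrow> 'a) \<Rightarrow> ereal" where
  "Jfun \<Omega> eps B w f v Dv =
     (if set_integrable lebesgue \<Omega> (\<lambda>x. B x (v x + w x))
      then ereal (1/2 * (LINT x:\<Omega>|lebesgue. eps x * (norm (Dv x))\<^sup>2)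
                  + (LINT x:\<Omega>|lebesgue. B x (v x + w x))
                  - (LINT x:\<Omega>|lebesgue. f x \<bullet> Dv x))
      else \<infinity>)"

end

(*
  Along a direction v in H^1_0 \<inter> L^\<infinity> the boundary trace is preserved, so t \<mapsto> J(u + t v)
  is minimal at t = 0.  The Dirichlet and source terms of J are polynomials in t.  Since v is
  bounded, the Boltzmann term B(x, u + w + t v) differs from its first-order Taylor polynomial by
  at most C t\<^sup>2 B(x, u + w), which is integrable because J(u) \<le> J(h) < \<infinity> for a continuous h
  with the same trace.  Hence J(u + t v) \<le> J(u) + t E + K t\<^sup>2, where E is the weak residual
  of the equation tested with v, and minimality forces E = 0.  Test functions are bounded
  H^1_0 functions whose weak gradient is the classical one (integration by parts via difference
  quotients), which gives the statement for C_c^\<infinity>.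
*)
theory Submission
  imports Defs
begin

lemma frechet_derivative_add_scaled:
  fixes f g :: "'a::real_normed_vector \<Rightarrow> real"
  assumes "f differentiable (at x)" "g differentiable (at x)"
  shows "frechet_derivative (\<lambda>x. f x + c * g x) (at x)
           = (\<lambda>h. frechet_derivative f (at x) h + c * frechet_derivative g (at x) h)"
proof (rule frechet_derivative_at[symmetric])
  show "((\<lambda>x. f x + c * g x) has_derivative
          (\<lambda>h. frechet_derivative f (at x) h + c * frechet_derivative g (at x) h)) (at x)"
    using assms[unfolded frechet_derivative_works] by (auto intro!: derivative_eq_intros)
qed

lemma Ck_add_scaled: "f \<in> Ck n \<Longrightarrow> g \<in> Ck n \<Longrightarrow> (\<lambda>x. f x + c * g x) \<in> Ck n"
proof (induction n arbitrary: f g)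
  case 0
  then show ?case by (auto intro!: continuous_intros)
next
  case (Suc n)
  have diff: "\<forall>x. f differentiable (at x)" "\<forall>x. g differentiable (at x)" using Suc.prems by auto
  have "(\<lambda>x. frechet_derivative (\<lambda>x. f x + c * g x) (at x) b) \<in> Ck n" if "b \<in> Basis" for b
    using Suc.IH[of "\<lambda>x. frechet_derivative f (at x) b" "\<lambda>x. frechet_derivative g (at x) b"] Suc.prems that
    by (simp add: frechet_derivative_add_scaled diff)
  moreover have "\<forall>x. (\<lambda>x. f x + c * g x) differentiable (at x)"
    using diff by (auto intro!: derivative_intros)
  ultimately show ?case by simp
qed

lemma tsupport_add_scaled: "tsupport (\<lambda>x. f x + c * g x) \<subseteq> tsupport f \<union> tsupport g"
proof -
  have "{x. f x + c * g x \<noteq> 0} \<subseteq> {x. f x \<noteq> 0} \<union> {x. g x \<noteq> 0}" by auto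
  then show ?thesis unfolding tsupport_def using closure_mono closure_Un by blast
qed

lemma test_fun_add_scaled:
  assumes "test_fun \<Omega> f" "test_fun \<Omega> g"
  shows "test_fun \<Omega> (\<lambda>x. f x + c * g x)"
proof -
  have "compact (tsupport f \<union> tsupport g)" using assms unfolding test_fun_def by auto
  then have "compact (tsupport (\<lambda>x. f x + c * g x))"
    using compact_Int_closed[of "tsupport f \<union> tsupport g" "tsupport (\<lambda>x. f x + c * g x)"]
      tsupport_add_scaled[of f c g]
    by (simp add: tsupport_def Int_absorb1)
  moreover have "smooth_fun (\<lambda>x. f x + c * g x)"
    using assms Ck_add_scaled unfolding test_fun_def smooth_fun_def by blast
  ultimately show ?thesis
    using assms tsupport_add_scaled[of f c g] unfolding test_fun_def by auto
qed

lemma test_fun_zero: "test_fun \<Omega> (\<lambda>x. 0)"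
proof -
  have "(\<lambda>x. 0) \<in> Ck n" for n by (induction n) auto
  then show ?thesis unfolding test_fun_def smooth_fun_def tsupport_def by auto
qed

lemma test_fun_differentiable:
  assumes "test_fun \<Omega> \<phi>"
  shows "\<phi> differentiable (at x)"
proof -
  have "\<phi> \<in> Ck (Suc 0)" using assms unfolding test_fun_def smooth_fun_def by blast
  then show ?thesis by simp
qed

lemma test_fun_continuous_on:
  assumes "test_fun \<Omega> \<phi>"
  shows "continuous_on UNIV \<phi>"
    and "b \<in> Basis \<Longrightarrow> continuous_on UNIV (\<lambda>x. frechet_derivative \<phi> (at x) b)"
proof -
  have "\<phi> \<in> Ck 0" "\<phi> \<in> Ck (Suc 0)" using assms unfolding test_fun_def smooth_fun_def by blast+
  then show "continuous_on UNIV \<phi>" "b \<in> Basis \<Longrightarrow> continuous_on UNIV (\<lambda>x. frechet_derivative \<phi> (at x) b)"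
    by auto
qed

lemma not_in_tsupport:
  assumes "x \<notin> tsupport f"
  shows "f x = 0" and "frechet_derivative f (at x) = (\<lambda>h. 0)"
proof -
  have vanish: "0 = f y" if "y \<in> - tsupport f" for y
  proof -
    have "y \<notin> closure {x. f x \<noteq> 0}" using that unfolding tsupport_def by simp
    then have "y \<notin> {x. f x \<noteq> 0}" by (rule contra_subsetD[OF closure_subset])
    then show ?thesis by simp
  qed
  then show "f x = 0" using assms by simp
  have "open (- tsupport f)" unfolding tsupport_def by auto
  with assms have "(f has_derivative (\<lambda>h. 0)) (at x)"
    by (intro has_derivative_transform_within_open[OF _ _ _ vanish]) auto
  then show "frechet_derivative f (at x) = (\<lambda>h. 0)" by (rule frechet_derivative_at[symmetric])
qed

lemma cgrad_inner_Basis: "b \<in> Basis \<Longrightarrow> cgrad f x \<bullet> b = frechet_derivative f (at x) b"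
  unfolding cgrad_def by (simp add: inner_sum_left inner_Basis if_distrib cong: if_cong)

lemma cgrad_add_scaled:
  assumes "f differentiable (at x)" "g differentiable (at x)"
  shows "cgrad (\<lambda>x. f x + c * g x) x = cgrad f x + c *\<^sub>R cgrad g x"
  unfolding cgrad_def frechet_derivative_add_scaled[OF assms]
  by (simp add: scaleR_add_left sum.distrib scaleR_sum_right)

lemma cgrad_not_in_tsupport: "x \<notin> tsupport f \<Longrightarrow> cgrad f x = 0"
  unfolding cgrad_def by (simp add: not_in_tsupport)

lemma continuous_on_cgrad: "test_fun \<Omega> \<phi> \<Longrightarrow> continuous_on UNIV (cgrad \<phi>)"
  unfolding cgrad_def[abs_def] by (intro continuous_intros test_fun_continuous_on)

lemma compact_imp_bounded_on:
  fixes f :: "'a::metric_space \<Rightarrow> 'b::real_normed_vector"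
  assumes "compact K" "continuous_on K f"
  obtains C where "\<And>x. x \<in> K \<Longrightarrow> norm (f x) \<le> C"
  using compact_imp_bounded[OF compact_continuous_image[OF assms(2,1)]]
  unfolding bounded_iff by blast

lemma bounded_compact_support:
  fixes f :: "'a::metric_space \<Rightarrow> 'b::real_normed_vector"
  assumes "continuous_on UNIV f" "compact K" "\<And>x. x \<notin> K \<Longrightarrow> f x = 0"
  obtains C where "\<And>x. norm (f x) \<le> C"
proof -
  obtain C where "\<And>x. x \<in> K \<Longrightarrow> norm (f x) \<le> C"
    using compact_imp_bounded_on[OF assms(2) continuous_on_subset[OF assms(1)]] by blast
  then have "norm (f x) \<le> max C 0" for x using assms(3)[of x] by (cases "x \<in> K") force+
  then show thesis by (rule that)
qed

section \<open>Test functions are bounded \<open>H\<^sup>1\<^sub>0\<close> functions\<close>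

lemma sets_lebesgue_open: "open (S :: 'a::euclidean_space set) \<Longrightarrow> S \<in> sets lebesgue"
  by (rule sets_completionI_sets) (simp add: borel_open)

lemma continuous_imp_borel_measurable_lebesgue:
  fixes f :: "'a::euclidean_space \<Rightarrow> 'b::euclidean_space"
  assumes "continuous_on UNIV f"
  shows "f \<in> borel_measurable lebesgue"
proof -
  have "f \<in> borel_measurable lborel"
    using borel_measurable_continuous_onI[OF assms] by (simp add: measurable_lborel2)
  then show ?thesis by (rule measurable_completion)
qed

lemma indicator_continuous_measurable:
  fixes f :: "'a::euclidean_space \<Rightarrow> 'b::euclidean_space"
  assumes "A \<in> sets borel" "continuous_on A f"
  shows "(\<lambda>x. indicator A x *\<^sub>R f x) \<in> borel_measurable lebesgue"
proof -
  have "(\<lambda>x. indicator A x *\<^sub>R f x) \<in> borel_measurable lborel"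
    using borel_measurable_continuous_on_indicator[OF assms] by (simp add: measurable_lborel2)
  then show ?thesis by (rule measurable_completion)
qed

lemma set_integral_lebesgue_eq_lborel:
  fixes F :: "'a::euclidean_space \<Rightarrow> real"
  assumes "F \<in> borel_measurable borel" "\<And>x. x \<notin> \<Omega> \<Longrightarrow> F x = 0"
  shows "(LINT x:\<Omega>|lebesgue. F x) = integral\<^sup>L lborel F"
    and "set_integrable lebesgue \<Omega> F \<longleftrightarrow> integrable lborel F"
proof -
  have F: "F \<in> borel_measurable lborel" using assms(1) by (simp add: measurable_lborel2)
  have "(\<lambda>x. indicator \<Omega> x *\<^sub>R F x) = F" using assms(2) by (intro ext) (auto simp: indicator_def)
  then show "(LINT x:\<Omega>|lebesgue. F x) = integral\<^sup>L lborel F"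
    and "set_integrable lebesgue \<Omega> F \<longleftrightarrow> integrable lborel F"
    unfolding set_lebesgue_integral_def set_integrable_def
    using integral_completion[OF F] integrable_completion[OF F] by simp_all
qed

lemma integrable_lborel_compact_support:
  fixes F :: "'a::euclidean_space \<Rightarrow> real"
  assumes "continuous_on UNIV F" "compact K" "\<And>x. x \<notin> K \<Longrightarrow> F x = 0"
  shows "integrable lborel F"
proof -
  have "integrable lborel (\<lambda>x. indicator K x *\<^sub>R F x)"
    using assms by (intro borel_integrable_compact) (auto intro: continuous_on_subset)
  moreover have "(\<lambda>x. indicator K x *\<^sub>R F x) = F" using assms(3) by (intro ext) (auto simp: indicator_def)
  ultimately show ?thesis by simp
qed

lemma lborel_integral_translate:
  fixes g :: "'a::euclidean_space \<Rightarrow> real"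
  assumes "g \<in> borel_measurable borel" "integrable lborel g"
  shows "integrable lborel (\<lambda>x. g (x + c))"
    and "integral\<^sup>L lborel (\<lambda>x. g (x + c)) = integral\<^sup>L lborel g"
proof -
  have "integrable (distr lborel borel ((+) c)) g" using assms(2) by (simp add: lborel_distr_plus)
  then show "integrable lborel (\<lambda>x. g (x + c))"
    using assms(1) by (subst (asm) integrable_distr_eq) (auto simp: add.commute)
  have "integral\<^sup>L lborel (\<lambda>x. g (c + x)) = integral\<^sup>L (distr lborel borel ((+) c)) g"
    using assms(1) by (rule integral_distr[symmetric, rotated]) simp
  then show "integral\<^sup>L lborel (\<lambda>x. g (x + c)) = integral\<^sup>L lborel g"
    by (simp add: lborel_distr_plus add.commute)
qed

lemma has_real_derivative_along_line:
  assumes der: "\<And>x. (g has_derivative D x) (at x)"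
  shows "((\<lambda>t. g (x + t *\<^sub>R b)) has_real_derivative D (x + t *\<^sub>R b) b) (at t)"
proof -
  have "((\<lambda>t. g (x + t *\<^sub>R b)) has_derivative (\<lambda>s. D (x + t *\<^sub>R b) (s *\<^sub>R b))) (at t)"
    by (rule has_derivative_compose[OF _ der]) (auto intro!: derivative_eq_intros)
  moreover have "linear (D (x + t *\<^sub>R b))" using der has_derivative_linear by blast
  ultimately show ?thesis
    by (simp add: has_field_derivative_def linear_scale mult.commute[of _ "D _ b"])
qed

lemma abs_difference_quotient_le:
  fixes g :: "'a::real_normed_vector \<Rightarrow> real"
  assumes der: "\<And>x. (g has_derivative D x) (at x)" and "0 < h"
    and bound: "\<And>s. 0 < s \<Longrightarrow> s < h \<Longrightarrow> \<bar>D (x + s *\<^sub>R b) b\<bar> \<le> M"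
  shows "\<bar>(g (x + h *\<^sub>R b) - g x) / h\<bar> \<le> M"
proof -
  obtain s where "0 < s" "s < h"
    and "g (x + h *\<^sub>R b) - g (x + 0 *\<^sub>R b) = (h - 0) * D (x + s *\<^sub>R b) b"
    using MVT2[of 0 h "\<lambda>t. g (x + t *\<^sub>R b)" "\<lambda>t. D (x + t *\<^sub>R b) b"] \<open>0 < h\<close>
      has_real_derivative_along_line[OF der] by blast
  then show ?thesis using bound \<open>0 < h\<close> by simp
qed

lemma abs_difference_quotient_le_indicator:
  fixes g :: "'a::euclidean_space \<Rightarrow> real"
  assumes der: "\<And>x. (g has_derivative D x) (at x)"
    and vanish: "\<And>x. R < norm x \<Longrightarrow> g x = 0"
    and M: "\<And>y. norm y \<le> R + 2 * norm b \<Longrightarrow> \<bar>D y b\<bar> \<le> M"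
    and h: "0 < h" "h \<le> 1"
  shows "\<bar>(g (x + h *\<^sub>R b) - g x) / h\<bar> \<le> indicator (cball 0 (R + norm b)) x * M"
proof (cases "x \<in> cball 0 (R + norm b)")
  case True
  have "\<bar>D (x + s *\<^sub>R b) b\<bar> \<le> M" if "0 < s" "s < h" for s
  proof -
    have "norm (s *\<^sub>R b) \<le> norm b" using that h by (simp add: mult_left_le_one_le)
    then show ?thesis using True M norm_triangle_ineq[of x "s *\<^sub>R b"] by simp
  qed
  then show ?thesis using True abs_difference_quotient_le[OF der h(1)] by simp
next
  case False
  then have far: "norm x > R + norm b" by simp
  moreover have "norm (h *\<^sub>R b) \<le> norm b" using h by (simp add: mult_left_le_one_le)
  ultimately have "R < norm (x + h *\<^sub>R b)"
    using norm_triangle_ineq2[of x "- (h *\<^sub>R b)"] by auto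
  moreover have "R < norm x" using far norm_ge_zero[of b] by linarith
  ultimately show ?thesis using False vanish by simp
qed

text \<open>The difference quotients of \<open>g\<close> in direction \<open>b\<close> all integrate to zero by translation
  invariance; by the mean value theorem they are dominated by a bounded function of compact
  support, so dominated convergence passes to the limit.\<close>
lemma integral_partial_derivative_eq_0:
  fixes g :: "'a::euclidean_space \<Rightarrow> real"
  assumes der: "\<And>x. (g has_derivative D x) (at x)"
    and cont: "continuous_on UNIV (\<lambda>x. D x b)"
    and K: "compact K" and vanish: "\<And>x. x \<notin> K \<Longrightarrow> g x = 0"
  shows "integral\<^sup>L lborel (\<lambda>x. D x b) = 0"
proof -
  obtain R where R: "\<forall>x\<in>K. norm x \<le> R"
    using compact_imp_bounded[OF K] unfolding bounded_iff by blast
  then have vanish_far: "g x = 0" if "R < norm x" for x using vanish that by force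
  obtain M where M: "\<And>y. y \<in> cball 0 (R + 2 * norm b) \<Longrightarrow> norm (D y b) \<le> M"
    using compact_imp_bounded_on[OF compact_cball continuous_on_subset[OF cont]] by blast
  have g_cont: "continuous_on UNIV g"
    using der by (meson continuous_at_imp_continuous_on has_derivative_continuous)
  then have g_meas [measurable]: "g \<in> borel_measurable borel" by (rule borel_measurable_continuous_onI)
  have D_meas [measurable]: "(\<lambda>x. D x b) \<in> borel_measurable borel"
    using cont by (rule borel_measurable_continuous_onI)
  have g_int: "integrable lborel g" using g_cont K vanish by (rule integrable_lborel_compact_support)
  define h :: "nat \<Rightarrow> real" where "h n = inverse (Suc n)" for n
  have h: "0 < h n" "h n \<le> 1" for n unfolding h_def by (auto simp: field_simps)
  define s where "s n x = (g (x + h n *\<^sub>R b) - g x) / h n" for n x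
  have "integral\<^sup>L lborel (s n) = 0" for n
    unfolding s_def[abs_def] using lborel_integral_translate[OF g_meas g_int]
    by (simp add: integral_diff g_int)
  moreover have "(\<lambda>n. integral\<^sup>L lborel (s n)) \<longlonglongrightarrow> integral\<^sup>L lborel (\<lambda>x. D x b)"
  proof (rule integral_dominated_convergence)
    have "filterlim h (at 0) sequentially"
      unfolding filterlim_at h_def using LIMSEQ_inverse_real_of_nat by auto
    moreover have "((\<lambda>t. (g (x + t *\<^sub>R b) - g x) / t) \<longlongrightarrow> D x b) (at 0)" for x
      using has_real_derivative_along_line[OF der, of x b 0] unfolding DERIV_def by simp
    ultimately have "(\<lambda>n. s n x) \<longlonglongrightarrow> D x b" for x
      unfolding s_def by (rule filterlim_compose[rotated])
    then show "AE x in lborel. (\<lambda>n. s n x) \<longlonglongrightarrow> D x b" by simp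
    show "AE x in lborel. norm (s n x) \<le> indicator (cball 0 (R + norm b)) x *\<^sub>R M" for n
    proof (intro AE_I2)
      fix x
      have "\<bar>s n x\<bar> \<le> indicator (cball 0 (R + norm b)) x * M"
        unfolding s_def using M by (intro abs_difference_quotient_le_indicator[OF der vanish_far _ h]) auto
      then show "norm (s n x) \<le> indicator (cball 0 (R + norm b)) x *\<^sub>R M" by simp
    qed
    show "integrable lborel (\<lambda>x. indicator (cball 0 (R + norm b)) x *\<^sub>R M)"
      by (intro borel_integrable_compact) auto
    show "(\<lambda>x. D x b) \<in> borel_measurable lborel" "s n \<in> borel_measurable lborel" for n
      unfolding s_def[abs_def] measurable_lborel2 by measurable
  qed
  ultimately show ?thesis by (simp add: LIMSEQ_const_iff)
qed

lemma C1_weak_grad: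
  assumes v: "v \<in> Ck (Suc 0)"
  shows "weak_grad \<Omega> v (cgrad v)"
  unfolding weak_grad_def
proof (intro allI impI ballI)
  fix \<phi> :: "'a \<Rightarrow> real" and b :: 'a
  assume \<phi>: "test_fun \<Omega> \<phi>" and b: "b \<in> Basis"
  define K where "K = tsupport \<phi>"
  have K: "compact K" "K \<subseteq> \<Omega>" using \<phi> unfolding K_def test_fun_def by auto
  have v_diff: "v differentiable (at x)" for x using v by simp
  define \<phi>' where "\<phi>' x = frechet_derivative \<phi> (at x) b" for x
  define v' where "v' x = frechet_derivative v (at x) b" for x
  have cont: "continuous_on UNIV (\<lambda>x. v x * \<phi>' x)" "continuous_on UNIV (\<lambda>x. v' x * \<phi> x)"
  proof -
    have "continuous_on UNIV v"
      using v_diff by (meson continuous_at_imp_continuous_on differentiable_imp_continuous_within)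
    moreover have "continuous_on UNIV v'" using v b unfolding v'_def by simp
    ultimately show "continuous_on UNIV (\<lambda>x. v x * \<phi>' x)" "continuous_on UNIV (\<lambda>x. v' x * \<phi> x)"
      using test_fun_continuous_on[OF \<phi>] b unfolding \<phi>'_def by (auto intro!: continuous_intros)
  qed
  have outside: "\<phi> x = 0" "\<phi>' x = 0" if "x \<notin> K" for x
    using not_in_tsupport[of x \<phi>] that unfolding K_def \<phi>'_def by auto
  have "((\<lambda>x. v x * \<phi> x) has_derivative (\<lambda>h. v x * frechet_derivative \<phi> (at x) h
          + frechet_derivative v (at x) h * \<phi> x)) (at x)" for x
    using v_diff test_fun_differentiable[OF \<phi>]
    by (intro has_derivative_mult) (simp_all add: frechet_derivative_works)
  then have "integral\<^sup>L lborel (\<lambda>x. v x * \<phi>' x + v' x * \<phi> x) = 0"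
    unfolding \<phi>'_def v'_def
    by (rule integral_partial_derivative_eq_0[OF _ _ K(1)])
       (use cont outside in \<open>auto simp: \<phi>'_def v'_def intro: continuous_on_add\<close>)
  moreover have "integrable lborel (\<lambda>x. v x * \<phi>' x)" "integrable lborel (\<lambda>x. v' x * \<phi> x)"
    using cont by (auto intro!: integrable_lborel_compact_support[OF _ K(1)] simp: outside)
  ultimately have "integral\<^sup>L lborel (\<lambda>x. v x * \<phi>' x) = - integral\<^sup>L lborel (\<lambda>x. v' x * \<phi> x)"
    by simp
  moreover have "x \<notin> \<Omega> \<Longrightarrow> x \<notin> K" for x using K(2) by blast
  ultimately show "(LINT x:\<Omega>|lebesgue. v x * frechet_derivative \<phi> (at x) b)
                     = - (LINT x:\<Omega>|lebesgue. (cgrad v x \<bullet> b) * \<phi> x)"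
    using cont[THEN borel_measurable_continuous_onI]
    by (simp add: cgrad_inner_Basis[OF b] set_integral_lebesgue_eq_lborel outside
                  flip: \<phi>'_def v'_def)
qed

lemma test_fun_H10_grad:
  assumes \<phi>: "test_fun \<Omega> \<phi>"
  shows "H10_grad \<Omega> \<phi> (cgrad \<phi>)"
proof -
  have K: "compact (tsupport \<phi>)" "tsupport \<phi> \<subseteq> \<Omega>" using \<phi> unfolding test_fun_def by auto
  have cont: "continuous_on UNIV \<phi>" "continuous_on UNIV (cgrad \<phi>)"
    using test_fun_continuous_on(1)[OF \<phi>] continuous_on_cgrad[OF \<phi>] by auto
  have square_int: "set_integrable lebesgue \<Omega> (\<lambda>x. (norm (F x))\<^sup>2)"
    if F: "continuous_on UNIV F" "\<And>x. x \<notin> tsupport \<phi> \<Longrightarrow> F x = 0"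
    for F :: "'a \<Rightarrow> 'b::euclidean_space"
  proof -
    have cont2: "continuous_on UNIV (\<lambda>x. (norm (F x))\<^sup>2)" using F(1) by (intro continuous_intros)
    have "integrable lborel (\<lambda>x. (norm (F x))\<^sup>2)"
      by (rule integrable_lborel_compact_support[OF cont2 K(1)]) (simp add: F(2))
    moreover have "(norm (F x))\<^sup>2 = 0" if "x \<notin> \<Omega>" for x using F(2) K(2) that by auto
    ultimately show ?thesis
      using set_integral_lebesgue_eq_lborel(2)[OF borel_measurable_continuous_onI[OF cont2]] by blast
  qed
  have "set_integrable lebesgue \<Omega> (\<lambda>x. (\<phi> x)\<^sup>2)"
    using square_int[OF cont(1)] by (simp add: not_in_tsupport)
  moreover have "set_integrable lebesgue \<Omega> (\<lambda>x. (norm (cgrad \<phi> x))\<^sup>2)"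
    using square_int[OF cont(2)] by (simp add: cgrad_not_in_tsupport)
  moreover have "weak_grad \<Omega> \<phi> (cgrad \<phi>)"
    using \<phi> unfolding test_fun_def smooth_fun_def by (blast intro: C1_weak_grad)
  ultimately have "H1_grad \<Omega> \<phi> (cgrad \<phi>)"
    unfolding H1_grad_def L2_on_def L2v_on_def
    using cont[THEN continuous_imp_borel_measurable_lebesgue] by simp
  then show ?thesis unfolding H10_grad_def using \<phi> by (auto intro!: exI[of _ "\<lambda>n. \<phi>"])
qed

lemma test_fun_Linf_on:
  assumes \<phi>: "test_fun \<Omega> \<phi>"
  shows "Linf_on \<Omega> \<phi>"
proof -
  have cont: "continuous_on UNIV \<phi>" by (rule test_fun_continuous_on(1)[OF \<phi>])
  obtain C where "\<And>x. norm (\<phi> x) \<le> C"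
    using bounded_compact_support[OF cont, of "tsupport \<phi>"] \<phi> not_in_tsupport(1)
    unfolding test_fun_def by blast
  then show ?thesis unfolding Linf_on_def
    using continuous_imp_borel_measurable_lebesgue[OF cont] by auto
qed

section \<open>Square integrable functions and Sobolev functions\<close>

lemma L2_on_measurable: "L2_on \<Omega> u \<Longrightarrow> u \<in> borel_measurable lebesgue"
  unfolding L2_on_def by simp

lemma L2v_on_measurable: "L2v_on \<Omega> F \<Longrightarrow> F \<in> borel_measurable lebesgue"
  unfolding L2v_on_def by simp

lemma set_integrable_const:
  fixes \<Omega> :: "'a::euclidean_space set"
  assumes "open \<Omega>" "bounded \<Omega>"
  shows "set_integrable lebesgue \<Omega> (\<lambda>x. c :: real)"
proof -
  have \<Omega>: "\<Omega> \<in> sets lborel" using assms(1) by (simp add: borel_open)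
  moreover have "emeasure lborel \<Omega> < \<infinity>" using assms by (intro emeasure_bounded_finite)
  ultimately have "integrable lborel (indicat_real \<Omega>)" by (rule integrable_real_indicator)
  then have "integrable lebesgue (indicat_real \<Omega>)"
    using integrable_completion[of "indicat_real \<Omega>"] \<Omega> by simp
  then show ?thesis unfolding set_integrable_def by simp
qed

lemma set_integrable_dominated:
  fixes f g :: "'a::euclidean_space \<Rightarrow> real"
  assumes "set_integrable lebesgue \<Omega> f" "g \<in> borel_measurable lebesgue" "\<Omega> \<in> sets lebesgue"
    and "\<And>x. x \<in> \<Omega> \<Longrightarrow> \<bar>g x\<bar> \<le> f x"
  shows "set_integrable lebesgue \<Omega> g"
proof (rule set_integrable_bound[OF assms(1)])
  show "set_borel_measurable lebesgue \<Omega> g"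
    unfolding set_borel_measurable_def using assms(2,3) by measurable
  show "AE x in lebesgue. x \<in> \<Omega> \<longrightarrow> norm (g x) \<le> norm (f x)"
    using assms(4) by (intro AE_I2) force
qed

lemma abs_mult_le_sum_squares: "\<bar>a * b\<bar> \<le> a\<^sup>2 + b\<^sup>2" for a b :: real
proof -
  have "2 * (\<bar>a\<bar> * \<bar>b\<bar>) \<le> a\<^sup>2 + b\<^sup>2" using sum_squares_bound[of "\<bar>a\<bar>" "\<bar>b\<bar>"] by (simp add: mult.assoc)
  moreover have "0 \<le> \<bar>a\<bar> * \<bar>b\<bar>" by simp
  ultimately show ?thesis unfolding abs_mult by linarith
qed

lemma power2_norm_add_scaled_le:
  fixes a b :: "'a::real_normed_vector"
  shows "(norm (a + t *\<^sub>R b))\<^sup>2 \<le> 2 * (norm a)\<^sup>2 + 2 * t\<^sup>2 * (norm b)\<^sup>2"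
proof -
  have "(norm (a + t *\<^sub>R b))\<^sup>2 \<le> (norm a + \<bar>t\<bar> * norm b)\<^sup>2"
    using norm_triangle_ineq[of a "t *\<^sub>R b"] by (intro power_mono) auto
  also have "\<dots> \<le> 2 * (norm a)\<^sup>2 + 2 * t\<^sup>2 * (norm b)\<^sup>2"
    using sum_squares_bound[of "norm a" "\<bar>t\<bar> * norm b"]
    by (simp add: power2_sum power_mult_distrib)
  finally show ?thesis .
qed

lemma L2_on_mult:
  assumes "\<Omega> \<in> sets lebesgue" "L2_on \<Omega> u" "L2_on \<Omega> v"
  shows "set_integrable lebesgue \<Omega> (\<lambda>x. u x * v x)"
proof (rule set_integrable_dominated[OF _ _ assms(1)])
  show "set_integrable lebesgue \<Omega> (\<lambda>x. (u x)\<^sup>2 + (v x)\<^sup>2)"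
    using assms unfolding L2_on_def by (intro set_integral_add) auto
  show "(\<lambda>x. u x * v x) \<in> borel_measurable lebesgue"
    using assms(2,3)[THEN L2_on_measurable] by measurable
qed (rule abs_mult_le_sum_squares)

lemma L2v_on_inner_bounded:
  assumes "\<Omega> \<in> sets lebesgue" "L2v_on \<Omega> F" "L2v_on \<Omega> G"
    and "e \<in> borel_measurable lebesgue" "\<And>x. x \<in> \<Omega> \<Longrightarrow> \<bar>e x\<bar> \<le> C"
  shows "set_integrable lebesgue \<Omega> (\<lambda>x. e x * (F x \<bullet> G x))"
proof (rule set_integrable_dominated[OF _ _ assms(1)])
  show "set_integrable lebesgue \<Omega> (\<lambda>x. C * ((norm (F x))\<^sup>2 + (norm (G x))\<^sup>2))"
    using assms unfolding L2v_on_def by (intro set_integrable_mult_right set_integral_add) auto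
  show "(\<lambda>x. e x * (F x \<bullet> G x)) \<in> borel_measurable lebesgue"
    using assms(2,3)[THEN L2v_on_measurable] assms(4) by measurable
  fix x assume "x \<in> \<Omega>"
  have "\<bar>F x \<bullet> G x\<bar> \<le> (norm (F x))\<^sup>2 + (norm (G x))\<^sup>2"
    using Cauchy_Schwarz_ineq2[of "F x" "G x"] abs_mult_le_sum_squares[of "norm (F x)" "norm (G x)"]
    by simp
  with assms(5)[OF \<open>x \<in> \<Omega>\<close>] show "\<bar>e x * (F x \<bullet> G x)\<bar> \<le> C * ((norm (F x))\<^sup>2 + (norm (G x))\<^sup>2)"
    unfolding abs_mult by (intro mult_mono) auto
qed

lemma L2_on_add_scaled:
  assumes "\<Omega> \<in> sets lebesgue" "L2_on \<Omega> u" "L2_on \<Omega> v"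
  shows "L2_on \<Omega> (\<lambda>x. u x + t * v x)"
proof -
  note [measurable] = assms(2,3)[THEN L2_on_measurable]
  have "set_integrable lebesgue \<Omega> (\<lambda>x. (u x + t * v x)\<^sup>2)"
  proof (rule set_integrable_dominated[OF _ _ assms(1)])
    show "set_integrable lebesgue \<Omega> (\<lambda>x. 2 * (u x)\<^sup>2 + 2 * t\<^sup>2 * (v x)\<^sup>2)"
      using assms unfolding L2_on_def by (intro set_integrable_mult_right set_integral_add) auto
    show "\<bar>(u x + t * v x)\<^sup>2\<bar> \<le> 2 * (u x)\<^sup>2 + 2 * t\<^sup>2 * (v x)\<^sup>2" for x
      using power2_norm_add_scaled_le[of "u x" t "v x"] by simp
  qed measurable
  moreover have "(\<lambda>x. u x + t * v x) \<in> borel_measurable lebesgue" by measurable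
  ultimately show ?thesis unfolding L2_on_def by blast
qed

lemma L2v_on_add_scaled:
  assumes "\<Omega> \<in> sets lebesgue" "L2v_on \<Omega> F" "L2v_on \<Omega> G"
  shows "L2v_on \<Omega> (\<lambda>x. F x + t *\<^sub>R G x)"
proof -
  note [measurable] = assms(2,3)[THEN L2v_on_measurable]
  have "set_integrable lebesgue \<Omega> (\<lambda>x. (norm (F x + t *\<^sub>R G x))\<^sup>2)"
  proof (rule set_integrable_dominated[OF _ _ assms(1)])
    show "set_integrable lebesgue \<Omega> (\<lambda>x. 2 * (norm (F x))\<^sup>2 + 2 * t\<^sup>2 * (norm (G x))\<^sup>2)"
      using assms unfolding L2v_on_def by (intro set_integrable_mult_right set_integral_add) auto
    show "\<bar>(norm (F x + t *\<^sub>R G x))\<^sup>2\<bar> \<le> 2 * (norm (F x))\<^sup>2 + 2 * t\<^sup>2 * (norm (G x))\<^sup>2" for x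
      using power2_norm_add_scaled_le[of "F x" t "G x"] by simp
  qed measurable
  moreover have "(\<lambda>x. F x + t *\<^sub>R G x) \<in> borel_measurable lebesgue" by measurable
  ultimately show ?thesis unfolding L2v_on_def by blast
qed

lemma L2v_on_inner_Basis:
  assumes "\<Omega> \<in> sets lebesgue" "L2v_on \<Omega> F" "b \<in> Basis"
  shows "L2_on \<Omega> (\<lambda>x. F x \<bullet> b)"
proof -
  note [measurable] = L2v_on_measurable[OF assms(2)]
  have "set_integrable lebesgue \<Omega> (\<lambda>x. (F x \<bullet> b)\<^sup>2)"
  proof (rule set_integrable_dominated[OF _ _ assms(1)])
    show "set_integrable lebesgue \<Omega> (\<lambda>x. (norm (F x))\<^sup>2)" using assms(2) unfolding L2v_on_def by simp
    show "\<bar>(F x \<bullet> b)\<^sup>2\<bar> \<le> (norm (F x))\<^sup>2" for x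
      using power_mono[OF Basis_le_norm[OF assms(3), of "F x"] abs_ge_zero, of 2] by simp
  qed measurable
  moreover have "(\<lambda>x. F x \<bullet> b) \<in> borel_measurable lebesgue" by measurable
  ultimately show ?thesis unfolding L2_on_def by blast
qed

lemma L2v_on_bounded:
  assumes "open \<Omega>" "bounded \<Omega>" "F \<in> borel_measurable lebesgue" "\<And>x. x \<in> \<Omega> \<Longrightarrow> norm (F x) \<le> C"
  shows "L2v_on \<Omega> F"
proof -
  note [measurable] = assms(3)
  have "set_integrable lebesgue \<Omega> (\<lambda>x. (norm (F x))\<^sup>2)"
  proof (rule set_integrable_dominated[OF set_integrable_const[OF assms(1,2), of "C\<^sup>2"]])
    show "\<bar>(norm (F x))\<^sup>2\<bar> \<le> C\<^sup>2" if "x \<in> \<Omega>" for x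
      using power_mono[OF assms(4)[OF that] norm_ge_zero, of 2] by simp
    show "\<Omega> \<in> sets lebesgue" using assms(1) by (rule sets_lebesgue_open)
  qed measurable
  then show ?thesis unfolding L2v_on_def using assms(3) by blast
qed

lemma L2v_on_scaleR_bounded:
  assumes "\<Omega> \<in> sets lebesgue" "L2v_on \<Omega> F"
    and "c \<in> borel_measurable lebesgue" "\<And>x. x \<in> \<Omega> \<Longrightarrow> \<bar>c x\<bar> \<le> C"
  shows "L2v_on \<Omega> (\<lambda>x. c x *\<^sub>R F x)"
proof -
  note [measurable] = L2v_on_measurable[OF assms(2)] assms(3)
  have "set_integrable lebesgue \<Omega> (\<lambda>x. (norm (c x *\<^sub>R F x))\<^sup>2)"
  proof (rule set_integrable_dominated[OF _ _ assms(1)])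
    show "set_integrable lebesgue \<Omega> (\<lambda>x. C\<^sup>2 * (norm (F x))\<^sup>2)"
      using assms(2) unfolding L2v_on_def by (intro set_integrable_mult_right) auto
    show "\<bar>(norm (c x *\<^sub>R F x))\<^sup>2\<bar> \<le> C\<^sup>2 * (norm (F x))\<^sup>2" if "x \<in> \<Omega>" for x
    proof -
      have "(c x)\<^sup>2 \<le> C\<^sup>2" using power_mono[OF assms(4)[OF that] abs_ge_zero, of 2] by simp
      then show ?thesis by (simp add: power_mult_distrib mult_right_mono)
    qed
  qed measurable
  moreover have "(\<lambda>x. c x *\<^sub>R F x) \<in> borel_measurable lebesgue" by measurable
  ultimately show ?thesis unfolding L2v_on_def by blast
qed

lemma weak_grad_add_scaled:
  assumes \<Omega>: "\<Omega> \<in> sets lebesgue" and u: "H1_grad \<Omega> u Du" and v: "H1_grad \<Omega> v Dv"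
  shows "weak_grad \<Omega> (\<lambda>x. u x + t * v x) (\<lambda>x. Du x + t *\<^sub>R Dv x)"
  unfolding weak_grad_def
proof (intro allI impI ballI)
  fix \<phi> :: "'a \<Rightarrow> real" and b :: 'a
  assume \<phi>: "test_fun \<Omega> \<phi>" and b: "b \<in> Basis"
  define \<phi>' where "\<phi>' x = frechet_derivative \<phi> (at x) b" for x
  have "L2_on \<Omega> \<phi>" "L2_on \<Omega> (\<lambda>x. cgrad \<phi> x \<bullet> b)"
    using test_fun_H10_grad[OF \<phi>] L2v_on_inner_Basis[OF \<Omega> _ b]
    unfolding H10_grad_def H1_grad_def by auto
  then have \<phi>_L2: "L2_on \<Omega> \<phi>" "L2_on \<Omega> \<phi>'"
    unfolding \<phi>'_def by (simp_all add: cgrad_inner_Basis[OF b])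
  have "L2_on \<Omega> u" "L2_on \<Omega> v" "L2_on \<Omega> (\<lambda>x. Du x \<bullet> b)" "L2_on \<Omega> (\<lambda>x. Dv x \<bullet> b)"
    using u v L2v_on_inner_Basis[OF \<Omega> _ b] unfolding H1_grad_def by auto
  then have int: "set_integrable lebesgue \<Omega> (\<lambda>x. u x * \<phi>' x)"
      "set_integrable lebesgue \<Omega> (\<lambda>x. v x * \<phi>' x)"
      "set_integrable lebesgue \<Omega> (\<lambda>x. (Du x \<bullet> b) * \<phi> x)"
      "set_integrable lebesgue \<Omega> (\<lambda>x. (Dv x \<bullet> b) * \<phi> x)"
    using \<phi>_L2 by (auto intro: L2_on_mult[OF \<Omega>])
  have "(LINT x:\<Omega>|lebesgue. u x * \<phi>' x) = - (LINT x:\<Omega>|lebesgue. (Du x \<bullet> b) * \<phi> x)"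
    "(LINT x:\<Omega>|lebesgue. v x * \<phi>' x) = - (LINT x:\<Omega>|lebesgue. (Dv x \<bullet> b) * \<phi> x)"
    using u v \<phi> b unfolding H1_grad_def weak_grad_def \<phi>'_def by blast+
  moreover have "(LINT x:\<Omega>|lebesgue. (u x + t * v x) * \<phi>' x)
      = (LINT x:\<Omega>|lebesgue. u x * \<phi>' x) + t * (LINT x:\<Omega>|lebesgue. v x * \<phi>' x)"
    using int by (simp add: distrib_right mult.assoc set_integral_add)
  moreover have "(LINT x:\<Omega>|lebesgue. ((Du x + t *\<^sub>R Dv x) \<bullet> b) * \<phi> x)
      = (LINT x:\<Omega>|lebesgue. (Du x \<bullet> b) * \<phi> x) + t * (LINT x:\<Omega>|lebesgue. (Dv x \<bullet> b) * \<phi> x)"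
    using int by (simp add: inner_add_left distrib_right mult.assoc set_integral_add)
  ultimately show "(LINT x:\<Omega>|lebesgue. (u x + t * v x) * frechet_derivative \<phi> (at x) b)
      = - (LINT x:\<Omega>|lebesgue. ((Du x + t *\<^sub>R Dv x) \<bullet> b) * \<phi> x)"
    unfolding \<phi>'_def by simp
qed

lemma H1_grad_add_scaled:
  assumes "\<Omega> \<in> sets lebesgue" "H1_grad \<Omega> u Du" "H1_grad \<Omega> v Dv"
  shows "H1_grad \<Omega> (\<lambda>x. u x + t * v x) (\<lambda>x. Du x + t *\<^sub>R Dv x)"
  using assms L2_on_add_scaled[OF assms(1)] L2v_on_add_scaled[OF assms(1)] weak_grad_add_scaled
  unfolding H1_grad_def by blast

definition H1_dist_sq :: "'a::euclidean_space set \<Rightarrow> ('a \<Rightarrow> real) \<Rightarrow> ('a \<Rightarrow> 'a) \<Rightarrow> ('a \<Rightarrow> real) \<Rightarrow> real"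
  where "H1_dist_sq \<Omega> v Dv \<phi> = (LINT x:\<Omega>|lebesgue. (v x - \<phi> x)\<^sup>2 + (norm (Dv x - cgrad \<phi> x))\<^sup>2)"

lemma H10_grad_iff_H1_dist_sq:
  "H10_grad \<Omega> v Dv \<longleftrightarrow> H1_grad \<Omega> v Dv \<and>
     (\<exists>\<phi>. (\<forall>n. test_fun \<Omega> (\<phi> n)) \<and> (\<lambda>n. H1_dist_sq \<Omega> v Dv (\<phi> n)) \<longlonglongrightarrow> 0)"
  unfolding H10_grad_def H1_dist_sq_def ..

lemma H1_dist_sq_nonneg: "0 \<le> H1_dist_sq \<Omega> v Dv \<phi>"
  unfolding H1_dist_sq_def set_lebesgue_integral_def by (intro integral_nonneg_AE AE_I2) simp

lemma set_integrable_H1_dist_sq_integrand: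
  assumes \<Omega>: "\<Omega> \<in> sets lebesgue" and "H1_grad \<Omega> w Dw" "test_fun \<Omega> \<phi>"
  shows "set_integrable lebesgue \<Omega> (\<lambda>x. (w x - \<phi> x)\<^sup>2 + (norm (Dw x - cgrad \<phi> x))\<^sup>2)"
proof -
  have "L2_on \<Omega> w" "L2v_on \<Omega> Dw" "L2_on \<Omega> \<phi>" "L2v_on \<Omega> (cgrad \<phi>)"
    using assms(2) test_fun_H10_grad[OF assms(3)] unfolding H10_grad_def H1_grad_def by auto
  then have "L2_on \<Omega> (\<lambda>x. w x - \<phi> x)" "L2v_on \<Omega> (\<lambda>x. Dw x - cgrad \<phi> x)"
    using L2_on_add_scaled[OF \<Omega>, of w \<phi> "-1"] L2v_on_add_scaled[OF \<Omega>, of Dw "cgrad \<phi>" "-1"]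
    by simp_all
  then show ?thesis unfolding L2_on_def L2v_on_def by (intro set_integral_add) auto
qed

lemma H1_dist_sq_add_scaled_le:
  assumes \<Omega>: "\<Omega> \<in> sets lebesgue" and u: "H1_grad \<Omega> u Du" and v: "H1_grad \<Omega> v Dv"
    and \<phi>: "test_fun \<Omega> \<phi>" and \<psi>: "test_fun \<Omega> \<psi>"
  shows "H1_dist_sq \<Omega> (\<lambda>x. u x + t * v x) (\<lambda>x. Du x + t *\<^sub>R Dv x) (\<lambda>x. \<phi> x + t * \<psi> x)
           \<le> 2 * H1_dist_sq \<Omega> u Du \<phi> + 2 * t\<^sup>2 * H1_dist_sq \<Omega> v Dv \<psi>"
proof -
  define err where "err w Dw \<eta> x = (w x - \<eta> x)\<^sup>2 + (norm (Dw x - cgrad \<eta> x))\<^sup>2"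
    for w Dw and \<eta> :: "'a \<Rightarrow> real" and x
  have dist_err: "H1_dist_sq \<Omega> w Dw \<eta> = (LINT x:\<Omega>|lebesgue. err w Dw \<eta> x)" for w Dw \<eta>
    unfolding H1_dist_sq_def err_def ..
  have err_int: "set_integrable lebesgue \<Omega> (err w Dw \<eta>)"
    if "H1_grad \<Omega> w Dw" "test_fun \<Omega> \<eta>" for w Dw \<eta>
    unfolding err_def[abs_def] using \<Omega> that by (rule set_integrable_H1_dist_sq_integrand)
  have err_le: "err (\<lambda>x. u x + t * v x) (\<lambda>x. Du x + t *\<^sub>R Dv x) (\<lambda>x. \<phi> x + t * \<psi> x) x
      \<le> 2 * err u Du \<phi> x + 2 * t\<^sup>2 * err v Dv \<psi> x" for x
  proof -
    have "cgrad (\<lambda>x. \<phi> x + t * \<psi> x) x = cgrad \<phi> x + t *\<^sub>R cgrad \<psi> x"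
      using \<phi> \<psi> by (intro cgrad_add_scaled test_fun_differentiable)
    then have "err (\<lambda>x. u x + t * v x) (\<lambda>x. Du x + t *\<^sub>R Dv x) (\<lambda>x. \<phi> x + t * \<psi> x) x
        = (norm ((u x - \<phi> x) + t *\<^sub>R (v x - \<psi> x)))\<^sup>2
          + (norm ((Du x - cgrad \<phi> x) + t *\<^sub>R (Dv x - cgrad \<psi> x)))\<^sup>2"
      unfolding err_def by (simp add: algebra_simps)
    also have "\<dots> \<le> 2 * err u Du \<phi> x + 2 * t\<^sup>2 * err v Dv \<psi> x"
      using power2_norm_add_scaled_le[of "u x - \<phi> x" t "v x - \<psi> x"]
        power2_norm_add_scaled_le[of "Du x - cgrad \<phi> x" t "Dv x - cgrad \<psi> x"]
      unfolding err_def by (simp add: algebra_simps)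
    finally show ?thesis .
  qed
  have int: "set_integrable lebesgue \<Omega> (\<lambda>x. 2 * err u Du \<phi> x)"
      "set_integrable lebesgue \<Omega> (\<lambda>x. 2 * t\<^sup>2 * err v Dv \<psi> x)"
    using err_int[OF u \<phi>] err_int[OF v \<psi>] by (auto intro: set_integrable_mult_right)
  have "H1_dist_sq \<Omega> (\<lambda>x. u x + t * v x) (\<lambda>x. Du x + t *\<^sub>R Dv x) (\<lambda>x. \<phi> x + t * \<psi> x)
      \<le> (LINT x:\<Omega>|lebesgue. 2 * err u Du \<phi> x + 2 * t\<^sup>2 * err v Dv \<psi> x)"
    unfolding dist_err
    using err_int[OF H1_grad_add_scaled[OF \<Omega> u v] test_fun_add_scaled[OF \<phi> \<psi>]]
      set_integral_add(1)[OF int] err_le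
    by (intro set_integral_mono) auto
  also have "\<dots> = 2 * H1_dist_sq \<Omega> u Du \<phi> + 2 * t\<^sup>2 * H1_dist_sq \<Omega> v Dv \<psi>"
    unfolding dist_err using int by (simp add: set_integral_add)
  finally show ?thesis .
qed

lemma H10_grad_add_scaled:
  assumes \<Omega>: "\<Omega> \<in> sets lebesgue" and u: "H10_grad \<Omega> u Du" and v: "H10_grad \<Omega> v Dv"
  shows "H10_grad \<Omega> (\<lambda>x. u x + t * v x) (\<lambda>x. Du x + t *\<^sub>R Dv x)"
proof -
  obtain \<phi> where \<phi>: "\<And>n. test_fun \<Omega> (\<phi> n)" "(\<lambda>n. H1_dist_sq \<Omega> u Du (\<phi> n)) \<longlonglongrightarrow> 0"
    using u unfolding H10_grad_iff_H1_dist_sq by blast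
  obtain \<psi> where \<psi>: "\<And>n. test_fun \<Omega> (\<psi> n)" "(\<lambda>n. H1_dist_sq \<Omega> v Dv (\<psi> n)) \<longlonglongrightarrow> 0"
    using v unfolding H10_grad_iff_H1_dist_sq by blast
  have H1: "H1_grad \<Omega> u Du" "H1_grad \<Omega> v Dv" using u v unfolding H10_grad_def by blast+
  define \<eta> where "\<eta> n x = \<phi> n x + t * \<psi> n x" for n x
  have lim: "(\<lambda>n. 2 * H1_dist_sq \<Omega> u Du (\<phi> n) + 2 * t\<^sup>2 * H1_dist_sq \<Omega> v Dv (\<psi> n)) \<longlonglongrightarrow> 0"
    using tendsto_add_zero[OF tendsto_mult_left_zero[OF \<phi>(2), of 2]
        tendsto_mult_left_zero[OF \<psi>(2), of "2 * t\<^sup>2"]] by (simp add: mult_ac)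
  have bound: "H1_dist_sq \<Omega> (\<lambda>x. u x + t * v x) (\<lambda>x. Du x + t *\<^sub>R Dv x) (\<eta> n)
      \<le> 2 * H1_dist_sq \<Omega> u Du (\<phi> n) + 2 * t\<^sup>2 * H1_dist_sq \<Omega> v Dv (\<psi> n)" for n
    unfolding \<eta>_def by (rule H1_dist_sq_add_scaled_le[OF \<Omega> H1 \<phi>(1) \<psi>(1)])
  have "(\<lambda>n. H1_dist_sq \<Omega> (\<lambda>x. u x + t * v x) (\<lambda>x. Du x + t *\<^sub>R Dv x) (\<eta> n)) \<longlonglongrightarrow> 0"
    by (rule tendsto_sandwich[OF always_eventually always_eventually tendsto_const lim])
       (simp_all add: H1_dist_sq_nonneg bound)
  moreover have "test_fun \<Omega> (\<eta> n)" for n unfolding \<eta>_def using \<phi>(1) \<psi>(1) by (rule test_fun_add_scaled)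
  ultimately show ?thesis
    unfolding H10_grad_iff_H1_dist_sq using H1_grad_add_scaled[OF \<Omega> H1] by blast
qed

lemma has_trace_add_H10:
  assumes \<Omega>: "\<Omega> \<in> sets lebesgue" and tr: "has_trace \<Omega> u g" "H1_grad \<Omega> u Du"
    and v: "H10_grad \<Omega> v Dv"
  shows "has_trace \<Omega> (\<lambda>x. u x + t * v x) g"
proof -
  obtain h where h: "H1 \<Omega> h" "continuous_on (closure \<Omega>) h" "\<forall>x\<in>frontier \<Omega>. h x = g x"
    "H10 \<Omega> (\<lambda>x. u x - h x)" using tr(1) unfolding has_trace_def by blast
  then obtain Dw where "H10_grad \<Omega> (\<lambda>x. u x - h x) Dw" unfolding H10_def by blast
  from H10_grad_add_scaled[OF \<Omega> this v, of t]
  have "H10 \<Omega> (\<lambda>x. (u x + t * v x) - h x)" unfolding H10_def by (auto simp: algebra_simps)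
  moreover have "H1 \<Omega> (\<lambda>x. u x + t * v x)"
    using H1_grad_add_scaled[OF \<Omega> tr(2)] v unfolding H1_def H10_grad_def by blast
  ultimately show ?thesis unfolding has_trace_def using h by blast
qed

section \<open>The exponential nonlinearity\<close>

lemma abs_exp_minus_one_minus_le_square:
  fixes z :: real
  assumes "\<bar>z\<bar> \<le> 1"
  shows "\<bar>exp z - 1 - z\<bar> \<le> z\<^sup>2"
proof -
  have "exp z \<le> 1 + z + z\<^sup>2"
  proof (cases "z \<ge> 0")
    case True
    then show ?thesis using exp_bound[of z] assms by simp
  next
    case False
    \<comment> \<open>\<open>exp (-z) \<ge> 1 - z\<close> and \<open>(1 + z + z\<^sup>2) * (1 - z) = 1 - z ^ 3 \<ge> 1\<close>\<close>
    have "exp z * (1 - z) \<le> exp z * exp (- z)" using exp_ge_add_one_self[of "- z"] by simp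
    also have "\<dots> \<le> (1 + z + z\<^sup>2) * (1 - z)"
      using False mult_nonpos_nonneg[of z "z * z"]
      by (simp add: exp_minus_inverse power2_eq_square algebra_simps)
    finally show ?thesis using False by (simp add: mult_le_cancel_right)
  qed
  moreover have "0 \<le> exp z - 1 - z" using exp_ge_add_one_self[of z] by linarith
  ultimately show ?thesis by simp
qed

lemma abs_sum_mult_le:
  fixes T \<xi> :: "nat \<Rightarrow> real"
  assumes "\<And>j. j < N \<Longrightarrow> 0 \<le> T j" "\<And>j. j < N \<Longrightarrow> \<bar>\<xi> j\<bar> \<le> \<Lambda>"
  shows "\<bar>\<Sum>j<N. \<xi> j * T j\<bar> \<le> \<Lambda> * (\<Sum>j<N. T j)"
proof -
  have "\<bar>\<Sum>j<N. \<xi> j * T j\<bar> \<le> (\<Sum>j<N. \<bar>\<xi> j * T j\<bar>)" by (rule sum_abs)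
  also have "\<dots> \<le> (\<Sum>j<N. \<Lambda> * T j)"
    using assms by (intro sum_mono) (simp add: abs_mult mult_right_mono)
  finally show ?thesis by (simp add: sum_distrib_left)
qed

lemma exp_sum_bounds:
  fixes T \<xi> :: "nat \<Rightarrow> real"
  assumes T: "\<And>j. j < N \<Longrightarrow> 0 \<le> T j" and \<xi>: "\<And>j. j < N \<Longrightarrow> \<bar>\<xi> j\<bar> \<le> \<Lambda>"
    and y: "0 \<le> \<Lambda>" "\<bar>y\<bar> \<le> Y" "\<Lambda> * Y \<le> 1"
  shows "(\<Sum>j<N. T j * exp (- \<xi> j * y)) \<le> exp 1 * (\<Sum>j<N. T j)"
    and "\<bar>(\<Sum>j<N. T j * exp (- \<xi> j * y)) - (\<Sum>j<N. T j) + y * (\<Sum>j<N. \<xi> j * T j)\<bar>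
           \<le> (\<Lambda> * Y)\<^sup>2 * (\<Sum>j<N. T j)"
proof -
  have z: "\<bar>- \<xi> j * y\<bar> \<le> 1" "(- \<xi> j * y)\<^sup>2 \<le> (\<Lambda> * Y)\<^sup>2" if "j < N" for j
  proof -
    have "\<bar>- \<xi> j * y\<bar> \<le> \<Lambda> * Y" using \<xi>[OF that] y by (simp add: abs_mult mult_mono)
    then show "\<bar>- \<xi> j * y\<bar> \<le> 1" "(- \<xi> j * y)\<^sup>2 \<le> (\<Lambda> * Y)\<^sup>2"
      using y(3) power_mono[of "\<bar>- \<xi> j * y\<bar>" "\<Lambda> * Y" 2] by auto
  qed
  have "(\<Sum>j<N. T j * exp (- \<xi> j * y)) \<le> (\<Sum>j<N. T j * exp 1)"
  proof (intro sum_mono mult_left_mono)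
    fix j assume "j \<in> {..<N}"
    then show "exp (- \<xi> j * y) \<le> exp 1" "0 \<le> T j" using z(1)[of j] T[of j] by auto
  qed
  also have "\<dots> = exp 1 * (\<Sum>j<N. T j)" by (metis mult.commute sum_distrib_right)
  finally show "(\<Sum>j<N. T j * exp (- \<xi> j * y)) \<le> exp 1 * (\<Sum>j<N. T j)" .
  have "(\<Sum>j<N. T j * exp (- \<xi> j * y)) - (\<Sum>j<N. T j) + y * (\<Sum>j<N. \<xi> j * T j)
      = (\<Sum>j<N. T j * (exp (- \<xi> j * y) - 1 - (- \<xi> j * y)))"
    by (simp add: sum_subtractf sum_distrib_left sum.distrib algebra_simps)
  also have "\<bar>\<dots>\<bar> \<le> (\<Sum>j<N. \<bar>T j * (exp (- \<xi> j * y) - 1 - (- \<xi> j * y))\<bar>)" by (rule sum_abs)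
  also have "\<dots> \<le> (\<Sum>j<N. (\<Lambda> * Y)\<^sup>2 * T j)"
  proof (intro sum_mono)
    fix j assume "j \<in> {..<N}"
    then have "\<bar>exp (- \<xi> j * y) - 1 - (- \<xi> j * y)\<bar> \<le> (\<Lambda> * Y)\<^sup>2" "0 \<le> T j"
      using abs_exp_minus_one_minus_le_square[of "- \<xi> j * y"] z T by force+
    then show "\<bar>T j * (exp (- \<xi> j * y) - 1 - (- \<xi> j * y))\<bar> \<le> (\<Lambda> * Y)\<^sup>2 * T j"
      by (simp add: abs_mult mult.commute mult_left_mono)
  qed
  finally show "\<bar>(\<Sum>j<N. T j * exp (- \<xi> j * y)) - (\<Sum>j<N. T j) + y * (\<Sum>j<N. \<xi> j * T j)\<bar>
           \<le> (\<Lambda> * Y)\<^sup>2 * (\<Sum>j<N. T j)"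
    by (simp add: sum_distrib_left)
qed

lemma linear_coefficient_eq_0:
  fixes E K \<delta> :: real
  assumes "\<delta> > 0" and nonneg: "\<And>t. \<bar>t\<bar> \<le> \<delta> \<Longrightarrow> 0 \<le> t * E + K * t\<^sup>2"
  shows "E = 0"
proof (rule ccontr)
  assume "E \<noteq> 0"
  define \<epsilon> where "\<epsilon> = min \<delta> (\<bar>E\<bar> / (\<bar>K\<bar> + 1))"
  have \<epsilon>: "0 < \<epsilon>" "\<epsilon> \<le> \<delta>" "\<epsilon> \<le> \<bar>E\<bar> / (\<bar>K\<bar> + 1)"
    using \<open>E \<noteq> 0\<close> assms(1) unfolding \<epsilon>_def by auto
  then have "\<epsilon> * (\<bar>K\<bar> + 1) \<le> \<bar>E\<bar>" by (simp add: pos_le_divide_eq add_pos_nonneg)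
  obtain t where t: "\<bar>t\<bar> = \<epsilon>" "t * E = - (\<epsilon> * \<bar>E\<bar>)"
  proof (cases "E > 0")
    case True
    then show ?thesis using that[of "- \<epsilon>"] \<epsilon>(1) by simp
  next
    case False
    then show ?thesis using that[of \<epsilon>] \<epsilon>(1) \<open>E \<noteq> 0\<close> by simp
  qed
  have "t\<^sup>2 = \<epsilon>\<^sup>2" using t(1) power2_abs[of t] by simp
  then have "0 \<le> - (\<epsilon> * \<bar>E\<bar>) + K * \<epsilon>\<^sup>2"
    using nonneg[of t] t \<epsilon>(2) by simp
  also have "\<dots> \<le> - (\<epsilon> * \<bar>E\<bar>) + \<bar>K\<bar> * \<epsilon>\<^sup>2" by (simp add: mult_right_mono)
  finally have "\<epsilon> * \<bar>E\<bar> \<le> \<epsilon> * (\<bar>K\<bar> * \<epsilon>)" by (simp add: power2_eq_square algebra_simps)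
  then have "\<bar>E\<bar> \<le> \<bar>K\<bar> * \<epsilon>" using \<epsilon>(1) by simp
  with \<open>\<epsilon> * (\<bar>K\<bar> + 1) \<le> \<bar>E\<bar>\<close> \<epsilon>(1) show False by (simp add: algebra_simps)
qed

lemma set_integrable_first_order_exp_sum:
  fixes T :: "nat \<Rightarrow> 'a::euclidean_space \<Rightarrow> real"
  assumes \<Omega>: "\<Omega> \<in> sets lebesgue"
    and T: "\<And>j. T j \<in> borel_measurable lebesgue" "\<And>j x. j < N \<Longrightarrow> 0 \<le> T j x"
    and S: "set_integrable lebesgue \<Omega> (\<lambda>x. \<Sum>j<N. T j x)"
    and v: "v \<in> borel_measurable lebesgue" "AE x in lebesgue. x \<in> \<Omega> \<longrightarrow> \<bar>v x\<bar> \<le> C"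
    and \<xi>: "\<And>j. j < N \<Longrightarrow> \<bar>\<xi> j\<bar> \<le> \<Lambda>"
  shows "set_integrable lebesgue \<Omega> (\<lambda>x. (\<Sum>j<N. \<xi> j * T j x) * v x)"
proof (rule set_integrable_bound[OF set_integrable_mult_right[OF S, of "\<Lambda> * C"]])
  note [measurable] = T(1) v(1)
  show "set_borel_measurable lebesgue \<Omega> (\<lambda>x. (\<Sum>j<N. \<xi> j * T j x) * v x)"
    unfolding set_borel_measurable_def using \<Omega> by measurable
  show "AE x in lebesgue. x \<in> \<Omega> \<longrightarrow> norm ((\<Sum>j<N. \<xi> j * T j x) * v x) \<le> norm (\<Lambda> * C * (\<Sum>j<N. T j x))"
    using v(2)
  proof eventually_elim
    case (elim x)
    have P: "\<bar>\<Sum>j<N. \<xi> j * T j x\<bar> \<le> \<Lambda> * (\<Sum>j<N. T j x)"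
      by (rule abs_sum_mult_le[where T="\<lambda>j. T j x", OF T(2) \<xi>])
    show ?case
    proof
      assume "x \<in> \<Omega>"
      then have "\<bar>\<Sum>j<N. \<xi> j * T j x\<bar> * \<bar>v x\<bar> \<le> \<Lambda> * (\<Sum>j<N. T j x) * C"
        using elim P by (intro mult_mono) auto
      then have "norm ((\<Sum>j<N. \<xi> j * T j x) * v x) \<le> \<Lambda> * C * (\<Sum>j<N. T j x)"
        by (simp add: abs_mult mult_ac)
      then show "norm ((\<Sum>j<N. \<xi> j * T j x) * v x) \<le> norm (\<Lambda> * C * (\<Sum>j<N. T j x))"
        by (rule order_trans) simp
    qed
  qed
qed

lemma set_integrable_exp_sum:
  fixes T :: "nat \<Rightarrow> 'a::euclidean_space \<Rightarrow> real"
  assumes \<Omega>: "\<Omega> \<in> sets lebesgue"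
    and T: "\<And>j. T j \<in> borel_measurable lebesgue" "\<And>j x. j < N \<Longrightarrow> 0 \<le> T j x"
    and S: "set_integrable lebesgue \<Omega> (\<lambda>x. \<Sum>j<N. T j x)"
    and v: "v \<in> borel_measurable lebesgue" "AE x in lebesgue. x \<in> \<Omega> \<longrightarrow> \<bar>v x\<bar> \<le> C"
    and \<xi>: "\<And>j. j < N \<Longrightarrow> \<bar>\<xi> j\<bar> \<le> \<Lambda>" and small: "0 \<le> \<Lambda>" "\<Lambda> * (\<bar>t\<bar> * C) \<le> 1"
  shows "set_integrable lebesgue \<Omega> (\<lambda>x. \<Sum>j<N. T j x * exp (- \<xi> j * (t * v x)))"
proof (rule set_integrable_bound[OF set_integrable_mult_right[OF S, of "exp 1"]])
  note [measurable] = T(1) v(1)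
  show "set_borel_measurable lebesgue \<Omega> (\<lambda>x. \<Sum>j<N. T j x * exp (- \<xi> j * (t * v x)))"
    unfolding set_borel_measurable_def using \<Omega> by measurable
  show "AE x in lebesgue. x \<in> \<Omega> \<longrightarrow>
      norm (\<Sum>j<N. T j x * exp (- \<xi> j * (t * v x))) \<le> norm (exp 1 * (\<Sum>j<N. T j x))"
    using v(2)
  proof eventually_elim
    case (elim x)
    have "0 \<le> (\<Sum>j<N. T j x * exp (- \<xi> j * (t * v x)))" "0 \<le> (\<Sum>j<N. T j x)"
      using T(2) by (auto intro: sum_nonneg)
    moreover have "(\<Sum>j<N. T j x * exp (- \<xi> j * (t * v x))) \<le> exp 1 * (\<Sum>j<N. T j x)"
      if "x \<in> \<Omega>"
      using elim that abs_mult[of t "v x"] mult_left_mono[of "\<bar>v x\<bar>" C "\<bar>t\<bar>"]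
      by (intro exp_sum_bounds(1)[where T="\<lambda>j. T j x", OF T(2) \<xi> small(1) _ small(2)]) auto
    ultimately show ?case by auto
  qed
qed

lemma exp_sum_set_integral_remainder:
  fixes T :: "nat \<Rightarrow> 'a::euclidean_space \<Rightarrow> real"
  assumes \<Omega>: "\<Omega> \<in> sets lebesgue"
    and T: "\<And>j. T j \<in> borel_measurable lebesgue" "\<And>j x. j < N \<Longrightarrow> 0 \<le> T j x"
    and S: "set_integrable lebesgue \<Omega> (\<lambda>x. \<Sum>j<N. T j x)"
    and v: "v \<in> borel_measurable lebesgue" "AE x in lebesgue. x \<in> \<Omega> \<longrightarrow> \<bar>v x\<bar> \<le> C"
    and \<xi>: "\<And>j. j < N \<Longrightarrow> \<bar>\<xi> j\<bar> \<le> \<Lambda>" and small: "0 \<le> \<Lambda>" "\<Lambda> * (\<bar>t\<bar> * C) \<le> 1"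
  shows "\<bar>(LINT x:\<Omega>|lebesgue. \<Sum>j<N. T j x * exp (- \<xi> j * (t * v x))) - (LINT x:\<Omega>|lebesgue. \<Sum>j<N. T j x)
           + t * (LINT x:\<Omega>|lebesgue. (\<Sum>j<N. \<xi> j * T j x) * v x)\<bar>
         \<le> (\<Lambda> * C)\<^sup>2 * t\<^sup>2 * (LINT x:\<Omega>|lebesgue. \<Sum>j<N. T j x)"
proof -
  define S where "S x = (\<Sum>j<N. T j x)" for x
  define R where "R x = (\<Sum>j<N. T j x * exp (- \<xi> j * (t * v x))) - S x
                        + t * ((\<Sum>j<N. \<xi> j * T j x) * v x)" for x
  note ints = set_integrable_exp_sum[OF \<Omega> T S v \<xi> small]
    set_integrable_first_order_exp_sum[OF \<Omega> T S v \<xi>]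
  then have R_int: "set_integrable lebesgue \<Omega> R" unfolding R_def S_def using S by auto
  have "(LINT x:\<Omega>|lebesgue. \<Sum>j<N. T j x * exp (- \<xi> j * (t * v x))) - (LINT x:\<Omega>|lebesgue. S x)
      + t * (LINT x:\<Omega>|lebesgue. (\<Sum>j<N. \<xi> j * T j x) * v x) = (LINT x:\<Omega>|lebesgue. R x)"
    unfolding R_def S_def using ints S by (simp add: set_integral_add set_integral_diff)
  also have "\<bar>\<dots>\<bar> \<le> (LINT x:\<Omega>|lebesgue. \<bar>R x\<bar>)"
    using set_integral_norm_bound[OF R_int] by simp
  also have "\<dots> \<le> (LINT x:\<Omega>|lebesgue. (\<Lambda> * C)\<^sup>2 * t\<^sup>2 * S x)"
  proof (rule set_integral_mono_AE)
    show "set_integrable lebesgue \<Omega> (\<lambda>x. \<bar>R x\<bar>)" using R_int by (rule set_integrable_abs)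
    show "set_integrable lebesgue \<Omega> (\<lambda>x. (\<Lambda> * C)\<^sup>2 * t\<^sup>2 * S x)" using S unfolding S_def by simp
    show "AE x \<in> \<Omega> in lebesgue. \<bar>R x\<bar> \<le> (\<Lambda> * C)\<^sup>2 * t\<^sup>2 * S x"
      using v(2)
    proof eventually_elim
      case (elim x)
      show ?case
      proof
        assume "x \<in> \<Omega>"
        then have v_x: "\<bar>v x\<bar> \<le> C" using elim by simp
        have "\<bar>t * v x\<bar> \<le> \<bar>t\<bar> * C" using v_x by (simp add: abs_mult mult_left_mono)
        have "R x = (\<Sum>j<N. T j x * exp (- \<xi> j * (t * v x))) - S x
                    + (t * v x) * (\<Sum>j<N. \<xi> j * T j x)"
          unfolding R_def by (simp add: mult_ac)
        also have "\<bar>\<dots>\<bar> \<le> (\<Lambda> * (\<bar>t\<bar> * C))\<^sup>2 * S x"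
          unfolding S_def
          by (rule exp_sum_bounds(2)[where T="\<lambda>j. T j x", OF T(2) \<xi> small(1) \<open>\<bar>t * v x\<bar> \<le> \<bar>t\<bar> * C\<close> small(2)])
        also have "\<dots> = (\<Lambda> * C)\<^sup>2 * t\<^sup>2 * S x" by (simp add: power_mult_distrib)
        finally show "\<bar>R x\<bar> \<le> (\<Lambda> * C)\<^sup>2 * t\<^sup>2 * S x" .
      qed
    qed
  qed
  finally show ?thesis unfolding S_def by simp
qed

lemma exp_sum_set_integral_expansion:
  fixes T :: "nat \<Rightarrow> 'a::euclidean_space \<Rightarrow> real"
  assumes \<Omega>: "\<Omega> \<in> sets lebesgue"
    and T: "\<And>j. T j \<in> borel_measurable lebesgue" "\<And>j x. j < N \<Longrightarrow> 0 \<le> T j x"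
    and S: "set_integrable lebesgue \<Omega> (\<lambda>x. \<Sum>j<N. T j x)"
    and v: "v \<in> borel_measurable lebesgue" "AE x in lebesgue. x \<in> \<Omega> \<longrightarrow> \<bar>v x\<bar> \<le> C"
  obtains \<delta> K where "0 < \<delta>"
    and "set_integrable lebesgue \<Omega> (\<lambda>x. (\<Sum>j<N. \<xi> j * T j x) * v x)"
    and "\<And>t. \<bar>t\<bar> \<le> \<delta> \<Longrightarrow> set_integrable lebesgue \<Omega> (\<lambda>x. \<Sum>j<N. T j x * exp (- \<xi> j * (t * v x)))"
    and "\<And>t. \<bar>t\<bar> \<le> \<delta> \<Longrightarrow>
      \<bar>(LINT x:\<Omega>|lebesgue. \<Sum>j<N. T j x * exp (- \<xi> j * (t * v x))) - (LINT x:\<Omega>|lebesgue. \<Sum>j<N. T j x)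
        + t * (LINT x:\<Omega>|lebesgue. (\<Sum>j<N. \<xi> j * T j x) * v x)\<bar> \<le> K * t\<^sup>2"
proof -
  define \<Lambda> where "\<Lambda> = 1 + (\<Sum>j<N. \<bar>\<xi> j\<bar>)"
  have \<Lambda>: "1 \<le> \<Lambda>" "\<And>j. j < N \<Longrightarrow> \<bar>\<xi> j\<bar> \<le> \<Lambda>"
  proof -
    show "1 \<le> \<Lambda>" unfolding \<Lambda>_def by (simp add: sum_nonneg)
    fix j assume "j < N"
    then have "\<bar>\<xi> j\<bar> \<le> (\<Sum>j<N. \<bar>\<xi> j\<bar>)" by (intro member_le_sum) auto
    then show "\<bar>\<xi> j\<bar> \<le> \<Lambda>" unfolding \<Lambda>_def by simp
  qed
  define \<delta> where "\<delta> = 1 / (\<Lambda> * (\<bar>C\<bar> + 1))"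
  have small: "0 \<le> \<Lambda>" "\<Lambda> * (\<bar>t\<bar> * C) \<le> 1" if "\<bar>t\<bar> \<le> \<delta>" for t
  proof -
    have "\<bar>t\<bar> * C \<le> \<bar>t\<bar> * \<bar>C\<bar>" by (simp add: mult_left_mono)
    also have "\<dots> \<le> \<delta> * (\<bar>C\<bar> + 1)" using that by (intro mult_mono) auto
    finally have "\<Lambda> * (\<bar>t\<bar> * C) \<le> \<Lambda> * (\<delta> * (\<bar>C\<bar> + 1))"
      using \<Lambda>(1) by (intro mult_left_mono) auto
    also have "\<dots> = 1" unfolding \<delta>_def using \<Lambda>(1) by (simp add: add_pos_nonneg)
    finally show "\<Lambda> * (\<bar>t\<bar> * C) \<le> 1" .
  qed (use \<Lambda>(1) in simp)
  have "0 < \<delta>" unfolding \<delta>_def using \<Lambda>(1) by simp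
  then show thesis
  proof (rule that)
    show "set_integrable lebesgue \<Omega> (\<lambda>x. (\<Sum>j<N. \<xi> j * T j x) * v x)"
      by (rule set_integrable_first_order_exp_sum[where \<xi>=\<xi>, OF \<Omega> T S v \<Lambda>(2)])
    show "set_integrable lebesgue \<Omega> (\<lambda>x. \<Sum>j<N. T j x * exp (- \<xi> j * (t * v x)))"
      if "\<bar>t\<bar> \<le> \<delta>" for t
      by (rule set_integrable_exp_sum[where \<xi>=\<xi>, OF \<Omega> T S v \<Lambda>(2) small[OF that]])
    show "\<bar>(LINT x:\<Omega>|lebesgue. \<Sum>j<N. T j x * exp (- \<xi> j * (t * v x))) - (LINT x:\<Omega>|lebesgue. \<Sum>j<N. T j x)
        + t * (LINT x:\<Omega>|lebesgue. (\<Sum>j<N. \<xi> j * T j x) * v x)\<bar>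
        \<le> ((\<Lambda> * C)\<^sup>2 * (LINT x:\<Omega>|lebesgue. \<Sum>j<N. T j x)) * t\<^sup>2" if "\<bar>t\<bar> \<le> \<delta>" for t
      using exp_sum_set_integral_remainder[where \<xi>=\<xi>, OF \<Omega> T S v \<Lambda>(2) small[OF that]]
      by (simp add: mult_ac)
  qed
qed

section \<open>The first variation of the energy\<close>

lemma set_integral_weighted_norm_add_scaled:
  assumes \<Omega>: "\<Omega> \<in> sets lebesgue" and F: "L2v_on \<Omega> F" and G: "L2v_on \<Omega> G"
    and e: "set_borel_measurable lebesgue \<Omega> e" "\<And>x. x \<in> \<Omega> \<Longrightarrow> \<bar>e x\<bar> \<le> C"
  shows "(LINT x:\<Omega>|lebesgue. e x * (norm (F x + t *\<^sub>R G x))\<^sup>2)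
    = (LINT x:\<Omega>|lebesgue. e x * (norm (F x))\<^sup>2) + 2 * t * (LINT x:\<Omega>|lebesgue. e x * (F x \<bullet> G x))
      + t\<^sup>2 * (LINT x:\<Omega>|lebesgue. e x * (norm (G x))\<^sup>2)"
proof -
  \<comment> \<open>\<open>e\<close> is only measurable on \<open>\<Omega>\<close>; its zero extension \<open>e'\<close> has the same integrals over \<open>\<Omega>\<close>\<close>
  define e' where "e' x = indicator \<Omega> x * e x" for x
  have e': "e' \<in> borel_measurable lebesgue" "\<And>x. x \<in> \<Omega> \<Longrightarrow> \<bar>e' x\<bar> \<le> C"
    using e unfolding e'_def set_borel_measurable_def by auto
  have same: "(LINT x:\<Omega>|lebesgue. e x * g x) = (LINT x:\<Omega>|lebesgue. e' x * g x)" for g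
    using \<Omega> by (intro set_lebesgue_integral_cong) (auto simp: e'_def)
  have int: "set_integrable lebesgue \<Omega> (\<lambda>x. e' x * (F x \<bullet> F x))"
      "set_integrable lebesgue \<Omega> (\<lambda>x. e' x * (F x \<bullet> G x))"
      "set_integrable lebesgue \<Omega> (\<lambda>x. e' x * (G x \<bullet> G x))"
    using L2v_on_inner_bounded[OF \<Omega> _ _ e'] F G by auto
  have "e' x * (norm (F x + t *\<^sub>R G x))\<^sup>2
      = e' x * (F x \<bullet> F x) + 2 * t * (e' x * (F x \<bullet> G x)) + t\<^sup>2 * (e' x * (G x \<bullet> G x))" for x
    unfolding power2_norm_eq_inner
    by (simp add: inner_add_left inner_add_right inner_commute power2_eq_square algebra_simps)
  then show ?thesis
    unfolding same using int by (simp add: set_integral_add power2_norm_eq_inner)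
qed

lemma set_integral_inner_add_scaled:
  assumes \<Omega>: "\<Omega> \<in> sets lebesgue" and "L2v_on \<Omega> f" "L2v_on \<Omega> F" "L2v_on \<Omega> G"
  shows "(LINT x:\<Omega>|lebesgue. f x \<bullet> (F x + t *\<^sub>R G x))
           = (LINT x:\<Omega>|lebesgue. f x \<bullet> F x) + t * (LINT x:\<Omega>|lebesgue. f x \<bullet> G x)"
proof -
  have "set_integrable lebesgue \<Omega> (\<lambda>x. f x \<bullet> F x)" "set_integrable lebesgue \<Omega> (\<lambda>x. f x \<bullet> G x)"
    using L2v_on_inner_bounded[OF \<Omega>, of _ _ "\<lambda>x. 1" 1] assms by auto
  then show ?thesis by (simp add: inner_add_right set_integral_add)
qed

lemma Jfun_add_scaled:
  assumes \<Omega>: "\<Omega> \<in> sets lebesgue"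
    and eps: "set_borel_measurable lebesgue \<Omega> eps" "\<And>x. x \<in> \<Omega> \<Longrightarrow> \<bar>eps x\<bar> \<le> C"
    and L2: "L2v_on \<Omega> f" "L2v_on \<Omega> Du" "L2v_on \<Omega> Dv"
    and B_int: "set_integrable lebesgue \<Omega> (\<lambda>x. B x (u x + t * v x + w x))"
  shows "Jfun \<Omega> eps B w f (\<lambda>x. u x + t * v x) (\<lambda>x. Du x + t *\<^sub>R Dv x)
    = ereal (1/2 * ((LINT x:\<Omega>|lebesgue. eps x * (norm (Du x))\<^sup>2)
                    + 2 * t * (LINT x:\<Omega>|lebesgue. eps x * (Du x \<bullet> Dv x))
                    + t\<^sup>2 * (LINT x:\<Omega>|lebesgue. eps x * (norm (Dv x))\<^sup>2))
             + (LINT x:\<Omega>|lebesgue. B x (u x + t * v x + w x))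
             - ((LINT x:\<Omega>|lebesgue. f x \<bullet> Du x) + t * (LINT x:\<Omega>|lebesgue. f x \<bullet> Dv x)))"
  using B_int set_integral_weighted_norm_add_scaled[OF \<Omega> L2(2,3) eps, of t]
    set_integral_inner_add_scaled[OF \<Omega> L2, of t]
  unfolding Jfun_def by (simp add: add_ac)

lemma Jfun_add_scaled_le:
  fixes \<Omega> :: "'a::euclidean_space set" and T :: "nat \<Rightarrow> 'a \<Rightarrow> real"
  assumes \<Omega>: "\<Omega> \<in> sets lebesgue"
    and T: "\<And>j. T j \<in> borel_measurable lebesgue" "\<And>j x. j < N \<Longrightarrow> 0 \<le> T j x"
    and B: "\<And>x y. B x (u x + w x + y) = (\<Sum>j<N. T j x * exp (- \<xi> j * y))"
    and b: "\<And>x. b x (u x + w x) = - (\<Sum>j<N. \<xi> j * T j x)"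
    and eps: "set_borel_measurable lebesgue \<Omega> eps" "\<And>x. x \<in> \<Omega> \<Longrightarrow> \<bar>eps x\<bar> \<le> C"
    and f: "L2v_on \<Omega> f" and u: "H1_grad \<Omega> u Du" and v: "H1_grad \<Omega> v Dv" "Linf_on \<Omega> v"
    and B_int: "set_integrable lebesgue \<Omega> (\<lambda>x. B x (u x + w x))"
  obtains \<delta> K where "0 < \<delta>" "set_integrable lebesgue \<Omega> (\<lambda>x. b x (u x + w x) * v x)"
    and "\<And>t. \<bar>t\<bar> \<le> \<delta> \<Longrightarrow> Jfun \<Omega> eps B w f (\<lambda>x. u x + t * v x) (\<lambda>x. Du x + t *\<^sub>R Dv x)
      \<le> Jfun \<Omega> eps B w f u Du + ereal (t * ((LINT x:\<Omega>|lebesgue. eps x * (Du x \<bullet> Dv x))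
            + (LINT x:\<Omega>|lebesgue. b x (u x + w x) * v x) - (LINT x:\<Omega>|lebesgue. f x \<bullet> Dv x)) + K * t\<^sup>2)"
proof -
  obtain Cv where v_meas: "v \<in> borel_measurable lebesgue"
    and v_bound: "AE x in lebesgue. x \<in> \<Omega> \<longrightarrow> \<bar>v x\<bar> \<le> Cv"
    using v(2) unfolding Linf_on_def by blast
  have L2: "L2v_on \<Omega> Du" "L2v_on \<Omega> Dv" using u v(1) unfolding H1_grad_def by auto
  have B_shift: "B x (u x + t * v x + w x) = (\<Sum>j<N. T j x * exp (- \<xi> j * (t * v x)))" for x t
    using B[of x "t * v x"] by (simp add: add_ac)
  have S_int: "set_integrable lebesgue \<Omega> (\<lambda>x. \<Sum>j<N. T j x)"
    using B_int B[of _ 0] by simp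
  have b_eq: "b x (u x + w x) * v x = - ((\<Sum>j<N. \<xi> j * T j x) * v x)" for x
    unfolding b by simp
  obtain \<delta> K where \<delta>: "0 < \<delta>"
    and P_int: "set_integrable lebesgue \<Omega> (\<lambda>x. (\<Sum>j<N. \<xi> j * T j x) * v x)"
    and Bt_int: "\<And>t. \<bar>t\<bar> \<le> \<delta> \<Longrightarrow>
      set_integrable lebesgue \<Omega> (\<lambda>x. \<Sum>j<N. T j x * exp (- \<xi> j * (t * v x)))"
    and expansion: "\<And>t. \<bar>t\<bar> \<le> \<delta> \<Longrightarrow>
      \<bar>(LINT x:\<Omega>|lebesgue. \<Sum>j<N. T j x * exp (- \<xi> j * (t * v x))) - (LINT x:\<Omega>|lebesgue. \<Sum>j<N. T j x)
        + t * (LINT x:\<Omega>|lebesgue. (\<Sum>j<N. \<xi> j * T j x) * v x)\<bar> \<le> K * t\<^sup>2"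
    using exp_sum_set_integral_expansion[where \<xi>=\<xi>, OF \<Omega> T S_int v_meas v_bound]
    by blast
  have b_int: "set_integrable lebesgue \<Omega> (\<lambda>x. b x (u x + w x) * v x)"
    using set_integrable_mult_right[OF P_int, of "-1"] unfolding b_eq by simp
  have b_integral: "(LINT x:\<Omega>|lebesgue. b x (u x + w x) * v x)
      = - (LINT x:\<Omega>|lebesgue. (\<Sum>j<N. \<xi> j * T j x) * v x)"
    unfolding b_eq by (simp add: set_lebesgue_integral_def)
  define A2 where "A2 = (LINT x:\<Omega>|lebesgue. eps x * (norm (Dv x))\<^sup>2)"
  show thesis
  proof (rule that[OF \<delta> b_int, of "\<bar>A2\<bar> / 2 + K"])
    fix t :: real assume t: "\<bar>t\<bar> \<le> \<delta>"
    have "t\<^sup>2 * A2 \<le> t\<^sup>2 * \<bar>A2\<bar>" by (simp add: mult_left_mono)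
    then show "Jfun \<Omega> eps B w f (\<lambda>x. u x + t * v x) (\<lambda>x. Du x + t *\<^sub>R Dv x)
      \<le> Jfun \<Omega> eps B w f u Du + ereal (t * ((LINT x:\<Omega>|lebesgue. eps x * (Du x \<bullet> Dv x))
            + (LINT x:\<Omega>|lebesgue. b x (u x + w x) * v x) - (LINT x:\<Omega>|lebesgue. f x \<bullet> Dv x))
            + (\<bar>A2\<bar> / 2 + K) * t\<^sup>2)"
      using Jfun_add_scaled[OF \<Omega> eps f L2, of B u t v w]
        Jfun_add_scaled[OF \<Omega> eps f L2, of B u 0 v w]
        Bt_int[OF t] S_int expansion[OF t]
      unfolding B_shift b_integral A2_def by (simp add: algebra_simps abs_le_iff)
  qed
qed

lemma Euler_Lagrange_equation:
  fixes \<Omega> :: "'a::euclidean_space set" and T :: "nat \<Rightarrow> 'a \<Rightarrow> real"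
  assumes \<Omega>: "\<Omega> \<in> sets lebesgue"
    and T: "\<And>j. T j \<in> borel_measurable lebesgue" "\<And>j x. j < N \<Longrightarrow> 0 \<le> T j x"
    and B: "\<And>x y. B x (u x + w x + y) = (\<Sum>j<N. T j x * exp (- \<xi> j * y))"
    and b: "\<And>x. b x (u x + w x) = - (\<Sum>j<N. \<xi> j * T j x)"
    and eps: "set_borel_measurable lebesgue \<Omega> eps" "\<And>x. x \<in> \<Omega> \<Longrightarrow> \<bar>eps x\<bar> \<le> C"
    and f: "L2v_on \<Omega> f" and u: "H1_grad \<Omega> u Du" and v: "H1_grad \<Omega> v Dv" "Linf_on \<Omega> v"
    and B_int: "set_integrable lebesgue \<Omega> (\<lambda>x. B x (u x + w x))"
    and min: "\<And>t. Jfun \<Omega> eps B w f u Du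
                    \<le> Jfun \<Omega> eps B w f (\<lambda>x. u x + t * v x) (\<lambda>x. Du x + t *\<^sub>R Dv x)"
  shows "set_integrable lebesgue \<Omega> (\<lambda>x. b x (u x + w x) * v x) \<and>
    (LINT x:\<Omega>|lebesgue. eps x * (Du x \<bullet> Dv x)) + (LINT x:\<Omega>|lebesgue. b x (u x + w x) * v x)
      = (LINT x:\<Omega>|lebesgue. f x \<bullet> Dv x)"
proof -
  define E where "E = (LINT x:\<Omega>|lebesgue. eps x * (Du x \<bullet> Dv x))
    + (LINT x:\<Omega>|lebesgue. b x (u x + w x) * v x) - (LINT x:\<Omega>|lebesgue. f x \<bullet> Dv x)"
  obtain \<delta> K where \<delta>: "0 < \<delta>" and b_int: "set_integrable lebesgue \<Omega> (\<lambda>x. b x (u x + w x) * v x)"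
    and le: "\<And>t. \<bar>t\<bar> \<le> \<delta> \<Longrightarrow> Jfun \<Omega> eps B w f (\<lambda>x. u x + t * v x) (\<lambda>x. Du x + t *\<^sub>R Dv x)
      \<le> Jfun \<Omega> eps B w f u Du + ereal (t * E + K * t\<^sup>2)"
    using Jfun_add_scaled_le[where T=T and N=N and \<xi>=\<xi> and B=B and b=b and u=u and w=w,
        OF \<Omega> T B b eps f u v B_int]
    unfolding E_def by blast
  have "\<bar>Jfun \<Omega> eps B w f u Du\<bar> \<noteq> \<infinity>"
    using B_int unfolding Jfun_def by simp
  then have "0 \<le> t * E + K * t\<^sup>2" if "\<bar>t\<bar> \<le> \<delta>" for t
    using order_trans[OF min le[OF that]] by (cases "Jfun \<Omega> eps B w f u Du") auto
  then have "E = 0" by (rule linear_coefficient_eq_0[OF \<delta>])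
  with b_int show ?thesis unfolding E_def by simp
qed

section \<open>The data of the model\<close>

text \<open>Near a boundary point \<open>x\<close> of \<open>U\<close>, the points \<open>x + s e\<close> with small \<open>s > 0\<close> lie strictly
  above the graph describing \<open>U\<close>, hence outside \<open>closure U\<close>.\<close>
lemma C1_boundary_frontier_subset_closure_exterior:
  fixes U :: "'a::euclidean_space set"
  assumes U: "open U" "C1_boundary U"
  shows "frontier U \<subseteq> closure (- closure U)"
proof
  fix x assume "x \<in> frontier U"
  then have "x \<notin> U" using U(1) by (simp add: frontier_def interior_open)
  obtain r e \<gamma> D where r: "r > 0" and e: "norm e = 1"
    and \<gamma>: "\<And>z. (\<gamma> has_derivative (\<lambda>h. D z \<bullet> h)) (at z)"
    and U_loc: "U \<inter> ball x r = {y \<in> ball x r. y \<bullet> e < \<gamma> (y - (y \<bullet> e) *\<^sub>R e)}"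
    using U(2) \<open>x \<in> frontier U\<close> unfolding C1_boundary_def by blast
  have \<gamma>_cont: "continuous_on UNIV \<gamma>"
    using \<gamma> by (meson continuous_at_imp_continuous_on has_derivative_continuous)
  have below: "\<gamma> (x - (x \<bullet> e) *\<^sub>R e) \<le> x \<bullet> e"
  proof (rule ccontr)
    assume "\<not> ?thesis"
    then have "x \<in> U \<inter> ball x r" using U_loc r by auto
    then show False using \<open>x \<notin> U\<close> by blast
  qed
  define V where "V = ball x r \<inter> {y. \<gamma> (y - (y \<bullet> e) *\<^sub>R e) < y \<bullet> e}"
  have "open {y. \<gamma> (y - (y \<bullet> e) *\<^sub>R e) < y \<bullet> e}"
    by (rule open_Collect_less) (auto intro!: continuous_intros continuous_on_compose2[OF \<gamma>_cont])
  then have "open V" unfolding V_def by auto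
  moreover have "V \<inter> U = {}"
  proof -
    have "y \<notin> U" if "y \<in> V" for y
    proof
      assume "y \<in> U"
      with that have "y \<in> U \<inter> ball x r" unfolding V_def by blast
      then have "y \<bullet> e < \<gamma> (y - (y \<bullet> e) *\<^sub>R e)" using U_loc by blast
      with that show False unfolding V_def by simp
    qed
    then show ?thesis by blast
  qed
  ultimately have "V \<inter> closure U = {}" by (simp add: open_Int_closure_eq_empty)
  then have "V \<subseteq> - closure U" by blast
  moreover have "x \<in> closure V"
    unfolding closure_approachable
  proof (intro allI impI)
    fix \<epsilon> :: real assume "\<epsilon> > 0"
    define s where "s = min \<epsilon> r / 2"
    have s: "0 < s" "s < \<epsilon>" "s < r" unfolding s_def using \<open>\<epsilon> > 0\<close> r by auto
    define y where "y = x + s *\<^sub>R e"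
    have dist_y: "dist y x = s" unfolding y_def using e s by (simp add: dist_norm)
    have "y \<bullet> e = x \<bullet> e + s" "y - (y \<bullet> e) *\<^sub>R e = x - (x \<bullet> e) *\<^sub>R e"
      using e unfolding y_def by (simp_all add: inner_add_left norm_eq_1 algebra_simps)
    then have "y \<in> V" unfolding V_def using dist_y s below by (auto simp: dist_commute)
    then show "\<exists>y\<in>V. dist y x < \<epsilon>" using dist_y s by blast
  qed
  ultimately show "x \<in> closure (- closure U)" using closure_mono by blast
qed

lemma Diff_subset_closure_Diff_closure:
  fixes \<Omega> U :: "'a::euclidean_space set"
  assumes \<Omega>: "open \<Omega>" and U: "open U" "C1_boundary U"
  shows "\<Omega> - U \<subseteq> closure (\<Omega> - closure U)"
proof
  fix x assume x: "x \<in> \<Omega> - U"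
  show "x \<in> closure (\<Omega> - closure U)"
  proof (cases "x \<in> closure U")
    case False
    then have "x \<in> \<Omega> - closure U" using x by blast
    then show ?thesis by (rule closure_subset[THEN subsetD])
  next
    case True
    then have "x \<in> frontier U" using x U(1) by (simp add: frontier_def interior_open)
    then have "x \<in> \<Omega> \<inter> closure (- closure U)"
      using x C1_boundary_frontier_subset_closure_exterior[OF U] by blast
    then show ?thesis using open_Int_closure_subset[OF \<Omega>, of "- closure U"] by (auto simp: Diff_eq)
  qed
qed

lemma has_derivative_radial_sum:
  fixes a :: "nat \<Rightarrow> 'a::euclidean_space"
  assumes "\<And>i. i < N \<Longrightarrow> x \<noteq> a i"
    and \<phi>: "\<And>r. r > 0 \<Longrightarrow> (\<phi> has_real_derivative \<phi>' r) (at r)"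
  shows "((\<lambda>x. K * (\<Sum>i<N. z i * \<phi> (norm (x - a i)))) has_derivative
     (\<lambda>h. (K *\<^sub>R (\<Sum>i<N. (z i * \<phi>' (norm (x - a i)) / norm (x - a i)) *\<^sub>R (x - a i))) \<bullet> h)) (at x)"
proof -
  have "((\<lambda>x. \<phi> (norm (x - a i))) has_derivative
      (\<lambda>h. h \<bullet> sgn (x - a i) * \<phi>' (norm (x - a i)))) (at x)" if "i < N" for i
  proof -
    have nz: "x - a i \<noteq> 0" using assms(1) that by auto
    have "((\<lambda>x. x - a i) has_derivative (\<lambda>h. h)) (at x)" by (auto intro!: derivative_eq_intros)
    from has_derivative_compose[OF this has_derivative_norm[OF nz]]
    have "((\<lambda>x. norm (x - a i)) has_derivative (\<lambda>h. h \<bullet> sgn (x - a i))) (at x)" by simp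
    from DERIV_compose_FDERIV[OF \<phi>[of "norm (x - a i)"] this] nz show ?thesis by simp
  qed
  then have "((\<lambda>x. K * (\<Sum>i<N. z i * \<phi> (norm (x - a i)))) has_derivative
      (\<lambda>h. K * (\<Sum>i<N. z i * (h \<bullet> sgn (x - a i) * \<phi>' (norm (x - a i)))))) (at x)"
    by (intro has_derivative_mult_right has_derivative_sum) auto
  then show ?thesis
    by (rule has_derivative_eq_rhs)
       (simp add: fun_eq_iff inner_sum_left inner_sum_right sum_distrib_left sgn_div_norm
          inner_commute divide_inverse mult_ac)
qed

lemma Gpot_eq_radial:
  obtains K \<phi> \<phi>' where "Gpot e0 kB T epsm Nm xs z = (\<lambda>x. K * (\<Sum>i<Nm. z i * \<phi> (norm (x - xs i))))"
    and "\<And>r. r > 0 \<Longrightarrow> (\<phi> has_real_derivative \<phi>' r) (at r)" and "continuous_on {0<..} \<phi>'"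
proof (cases "DIM('a) = 2")
  case True
  show ?thesis
  proof (rule that)
    show "Gpot e0 kB T epsm Nm xs z
            = (\<lambda>x::'a. (- 2 * e0\<^sup>2 / (epsm * kB * T)) * (\<Sum>i<Nm. z i * ln (norm (x - xs i))))"
      unfolding Gpot_def[abs_def] using True by simp
  qed (auto intro: DERIV_ln continuous_intros)
next
  case False
  show ?thesis
  proof (rule that)
    show "Gpot e0 kB T epsm Nm xs z
            = (\<lambda>x::'a. (e0\<^sup>2 / (epsm * kB * T)) * (\<Sum>i<Nm. z i * inverse (norm (x - xs i))))"
      unfolding Gpot_def[abs_def] using False by (simp add: divide_inverse)
    show "((inverse :: real \<Rightarrow> real) has_real_derivative - (inverse r ^ 2)) (at r)" if "r > 0" for r
      using DERIV_inverse[of r] that by (simp add: power2_eq_square)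
  qed (auto intro!: continuous_intros)
qed

lemma Gpot_continuously_differentiable:
  obtains DG where "continuous_on (- xs ` {..<Nm}) DG"
    and "\<And>x. x \<notin> xs ` {..<Nm} \<Longrightarrow>
           (Gpot e0 kB T epsm Nm xs z has_derivative (\<lambda>h. DG x \<bullet> h)) (at x)"
proof -
  obtain K \<phi> \<phi>' where G: "Gpot e0 kB T epsm Nm xs z = (\<lambda>x. K * (\<Sum>i<Nm. z i * \<phi> (norm (x - xs i))))"
    and \<phi>: "\<And>r. r > 0 \<Longrightarrow> (\<phi> has_real_derivative \<phi>' r) (at r)"
    and \<phi>'_cont: "continuous_on {0<..} \<phi>'"
    using Gpot_eq_radial[of e0 kB T epsm Nm xs z] by blast
  define DG where "DG x = K *\<^sub>R (\<Sum>i<Nm. (z i * \<phi>' (norm (x - xs i)) / norm (x - xs i)) *\<^sub>R (x - xs i))"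
    for x
  have "continuous_on (- xs ` {..<Nm}) (\<lambda>x. \<phi>' (norm (x - xs i)))" if "i < Nm" for i
    using that by (intro continuous_on_compose2[OF \<phi>'_cont]) (auto intro!: continuous_intros)
  then have "continuous_on (- xs ` {..<Nm}) DG"
    unfolding DG_def by (intro continuous_intros) auto
  moreover have "(Gpot e0 kB T epsm Nm xs z has_derivative (\<lambda>h. DG x \<bullet> h)) (at x)"
    if "x \<notin> xs ` {..<Nm}" for x
    unfolding G DG_def using that by (intro has_derivative_radial_sum[OF _ \<phi>]) auto
  ultimately show thesis by (rule that)
qed

lemma piecewise_coefficient_bounded_measurable:
  fixes \<Omega> U :: "'a::euclidean_space set" and a :: "'a \<Rightarrow> real"
  assumes \<Omega>: "open \<Omega>" "bounded \<Omega>" and U: "open U" "C1_boundary U"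
    and a: "continuous_on (closure (\<Omega> - closure U)) a"
  obtains C where "set_borel_measurable lebesgue \<Omega> (\<lambda>x. if x \<in> U then c else a x)"
    and "\<And>x. x \<in> \<Omega> \<Longrightarrow> \<bar>if x \<in> U then c else a x\<bar> \<le> C"
proof -
  have outside: "\<Omega> - U \<subseteq> closure (\<Omega> - closure U)"
    using Diff_subset_closure_Diff_closure[OF \<Omega>(1) U] .
  have "compact (closure (\<Omega> - closure U))"
    using \<Omega>(2) by (meson Diff_subset bounded_closure bounded_subset compact_closure)
  then obtain C where C: "\<And>x. x \<in> closure (\<Omega> - closure U) \<Longrightarrow> norm (a x) \<le> C"
    using a compact_imp_bounded_on by blast
  have "(\<lambda>x. indicator (\<Omega> - U) x *\<^sub>R a x) \<in> borel_measurable lebesgue"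
    using \<Omega>(1) U(1) continuous_on_subset[OF a outside]
    by (intro indicator_continuous_measurable) auto
  moreover have "(\<lambda>x. indicator \<Omega> x *\<^sub>R (if x \<in> U then c else a x))
      = (\<lambda>x. c * indicator (\<Omega> \<inter> U) x + indicator (\<Omega> - U) x *\<^sub>R a x)"
    by (auto simp: indicator_def)
  moreover have "\<Omega> \<inter> U \<in> sets lebesgue" using \<Omega>(1) U(1) by (intro sets_lebesgue_open) auto
  ultimately have "set_borel_measurable lebesgue \<Omega> (\<lambda>x. if x \<in> U then c else a x)"
    unfolding set_borel_measurable_def by simp
  moreover have "\<bar>if x \<in> U then c else a x\<bar> \<le> max \<bar>c\<bar> C" if "x \<in> \<Omega>" for x
    using C[of x] outside that by auto
  ultimately show thesis by (rule that)
qed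

lemma L2v_on_indicator_continuous:
  fixes \<Omega> A :: "'a::euclidean_space set"
  assumes "open \<Omega>" "bounded \<Omega>" "open A" "bounded A" "continuous_on (closure A) F"
  shows "L2v_on \<Omega> (\<lambda>x. indicator A x *\<^sub>R F x)"
proof -
  have "compact (closure A)" using assms(4) by (simp add: compact_closure)
  then obtain C where C: "\<And>x. x \<in> closure A \<Longrightarrow> norm (F x) \<le> C"
    using assms(5) compact_imp_bounded_on by blast
  show ?thesis
  proof (rule L2v_on_bounded[OF assms(1,2)])
    show "(\<lambda>x. indicator A x *\<^sub>R F x) \<in> borel_measurable lebesgue"
      using assms(3) continuous_on_subset[OF assms(5) closure_subset]
      by (intro indicator_continuous_measurable) (auto simp: borel_open)
    show "norm (indicator A x *\<^sub>R F x) \<le> max C 0" for x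
      using C[of x] closure_subset[of A] by (auto simp: indicator_def)
  qed
qed

lemma set_integrable_indicator_exp_sum:
  fixes \<Omega> A :: "'a::euclidean_space set" and c \<xi> :: "nat \<Rightarrow> real"
  assumes \<Omega>: "open \<Omega>" "bounded \<Omega>" and A: "open A" "continuous_on A g" "\<And>x. x \<in> A \<Longrightarrow> \<bar>g x\<bar> \<le> M"
  shows "set_integrable lebesgue \<Omega> (\<lambda>x. \<Sum>j<N. c j * indicator A x * exp (- \<xi> j * g x))"
proof (rule set_integrable_dominated[OF set_integrable_const[OF \<Omega>, of "\<Sum>j<N. \<bar>c j\<bar> * exp (\<bar>\<xi> j\<bar> * \<bar>M\<bar>)"]])
  have "(\<lambda>x. indicator A x *\<^sub>R exp (- \<xi> j * g x)) \<in> borel_measurable lebesgue" for j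
    using A by (intro indicator_continuous_measurable continuous_intros) (auto simp: borel_open)
  then show "(\<lambda>x. \<Sum>j<N. c j * indicator A x * exp (- \<xi> j * g x)) \<in> borel_measurable lebesgue"
    by (simp add: mult.assoc)
  show "\<Omega> \<in> sets lebesgue" using \<Omega>(1) by (rule sets_lebesgue_open)
  fix x
  have "\<bar>c j * indicator A x * exp (- \<xi> j * g x)\<bar> \<le> \<bar>c j\<bar> * exp (\<bar>\<xi> j\<bar> * \<bar>M\<bar>)" for j
  proof (cases "x \<in> A")
    case True
    have "- \<xi> j * g x \<le> \<bar>\<xi> j\<bar> * \<bar>g x\<bar>" by (simp add: abs_mult[symmetric])
    also have "\<dots> \<le> \<bar>\<xi> j\<bar> * \<bar>M\<bar>" using A(3)[OF True] by (intro mult_left_mono) auto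
    finally show ?thesis using True by (simp add: abs_mult mult_left_mono)
  qed simp
  then show "\<bar>\<Sum>j<N. c j * indicator A x * exp (- \<xi> j * g x)\<bar> \<le> (\<Sum>j<N. \<bar>c j\<bar> * exp (\<bar>\<xi> j\<bar> * \<bar>M\<bar>))"
    by (intro order_trans[OF sum_abs] sum_mono)
qed

lemma has_trace_continuous_representative:
  assumes "has_trace \<Omega> u g"
  obtains h Dh where "H1_grad \<Omega> h Dh" "has_trace \<Omega> h g" "continuous_on (closure \<Omega>) h"
proof -
  obtain h where h: "H1 \<Omega> h" "continuous_on (closure \<Omega>) h" "\<forall>x\<in>frontier \<Omega>. h x = g x"
    using assms unfolding has_trace_def by blast
  obtain Dh where "H1_grad \<Omega> h Dh" using h(1) unfolding H1_def by blast
  moreover have "H10 \<Omega> (\<lambda>x. h x - h x)"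
    using test_fun_H10_grad[OF test_fun_zero] unfolding H10_def by auto
  then have "has_trace \<Omega> h g" unfolding has_trace_def using h by blast
  ultimately show thesis using h(2) by (rule that)
qed

lemma Jfun_le_imp_set_integrable:
  assumes "Jfun \<Omega> eps B w f u Du \<le> Jfun \<Omega> eps B w f h Dh"
    and "set_integrable lebesgue \<Omega> (\<lambda>x. B x (h x + w x))"
  shows "set_integrable lebesgue \<Omega> (\<lambda>x. B x (u x + w x))"
  using assms unfolding Jfun_def by (auto split: if_splits)

lemma Bfun_eq_exp_sum:
  "Bfun e0 kB T N M \<xi> A x t = (\<Sum>j<N. (4 * pi * e0\<^sup>2 / (kB * T) * M j) * indicator A x * exp (- \<xi> j * t))"
  unfolding Bfun_def by (simp add: sum_distrib_left mult_ac)

lemma bfun_eq_exp_sum: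
  "bfun e0 kB T N M \<xi> A x t
     = - (\<Sum>j<N. \<xi> j * ((4 * pi * e0\<^sup>2 / (kB * T) * M j) * indicator A x * exp (- \<xi> j * t)))"
  unfolding bfun_def by (simp add: sum_distrib_left sum_negf mult_ac)

lemma Gpot_continuous_bounded_on:
  assumes "compact K" "K \<inter> xs ` {..<Nm} = {}"
  obtains M where "continuous_on K (Gpot e0 kB T epsm Nm xs z)"
    and "\<And>x. x \<in> K \<Longrightarrow> \<bar>Gpot e0 kB T epsm Nm xs z x\<bar> \<le> M"
proof -
  obtain DG where "\<And>x. x \<notin> xs ` {..<Nm} \<Longrightarrow>
      (Gpot e0 kB T epsm Nm xs z has_derivative (\<lambda>h. DG x \<bullet> h)) (at x)"
    using Gpot_continuously_differentiable by blast
  then have cont: "continuous_on K (Gpot e0 kB T epsm Nm xs z)"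
    using assms(2) by (meson continuous_at_imp_continuous_on disjoint_iff has_derivative_continuous)
  then obtain M where "\<And>x. x \<in> K \<Longrightarrow> norm (Gpot e0 kB T epsm Nm xs z x) \<le> M"
    using assms(1) compact_imp_bounded_on by blast
  then have "\<And>x. x \<in> K \<Longrightarrow> \<bar>Gpot e0 kB T epsm Nm xs z x\<bar> \<le> M" by simp
  with cont show thesis by (rule that)
qed

lemma L2v_on_indicator_scaleR_grad_Gpot:
  fixes \<Omega> \<Omega>s :: "'a::euclidean_space set"
  assumes \<Omega>: "open \<Omega>" "bounded \<Omega>" and \<Omega>s: "open \<Omega>s" "bounded \<Omega>s"
    and charges: "closure \<Omega>s \<inter> xs ` {..<Nm} = {}"
    and DG: "\<forall>x\<in>\<Omega>s. (Gpot e0 kB T epsm Nm xs z has_derivative (\<lambda>h. DG x \<bullet> h)) (at x)"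
    and a: "continuous_on (closure \<Omega>s) a"
  shows "L2v_on \<Omega> (\<lambda>x. (indicator \<Omega>s x * a x) *\<^sub>R DG x)"
proof -
  obtain DG' where DG'_cont: "continuous_on (- xs ` {..<Nm}) DG'"
    and DG': "\<And>x. x \<notin> xs ` {..<Nm} \<Longrightarrow>
      (Gpot e0 kB T epsm Nm xs z has_derivative (\<lambda>h. DG' x \<bullet> h)) (at x)"
    using Gpot_continuously_differentiable by blast
  have "DG x = DG' x" if "x \<in> \<Omega>s" for x
  proof (rule euclidean_eqI)
    fix b :: 'a
    have "x \<notin> xs ` {..<Nm}" using that charges closure_subset by blast
    then have "(\<lambda>h. DG x \<bullet> h) = (\<lambda>h. DG' x \<bullet> h)"
      using has_derivative_unique[OF DG[rule_format, OF that] DG'] by blast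
    then show "DG x \<bullet> b = DG' x \<bullet> b" by metis
  qed
  then have "(\<lambda>x. (indicator \<Omega>s x * a x) *\<^sub>R DG x) = (\<lambda>x. indicator \<Omega>s x *\<^sub>R (a x *\<^sub>R DG' x))"
    by (auto simp: indicator_def)
  moreover have "continuous_on (closure \<Omega>s) (\<lambda>x. a x *\<^sub>R DG' x)"
    using a continuous_on_subset[OF DG'_cont] charges by (intro continuous_intros) auto
  ultimately show ?thesis using L2v_on_indicator_continuous[OF \<Omega> \<Omega>s] by (simp only:)
qed

lemma L2v_on_source_term:
  fixes \<Omega> \<Omega>m \<Omega>s :: "'a::euclidean_space set"
  assumes \<Omega>: "open \<Omega>" "bounded \<Omega>" and \<Omega>m: "open \<Omega>m" and \<Omega>s: "open \<Omega>s" "bounded \<Omega>s"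
    and charges: "closure \<Omega>s \<inter> xs ` {..<Nm} = {}"
    and DG: "\<forall>x\<in>\<Omega>s. (Gpot e0 kB T epsm Nm xs z has_derivative (\<lambda>h. DG x \<bullet> h)) (at x)"
    and epss: "continuous_on (closure \<Omega>s) epss" and DuH: "L2v_on \<Omega> DuH"
    and f: "f = (\<lambda>x. (indicator \<Omega>s x * (epsm - epss x)) *\<^sub>R DG x) \<or>
            f = (\<lambda>x. (- (indicator \<Omega>m x * epsm)) *\<^sub>R DuH x + (indicator \<Omega>s x * epsm) *\<^sub>R DG x)"
  shows "L2v_on \<Omega> f"
proof -
  have \<Omega>_sets: "\<Omega> \<in> sets lebesgue" using \<Omega>(1) by (rule sets_lebesgue_open)
  have DG_L2: "L2v_on \<Omega> (\<lambda>x. (indicator \<Omega>s x * a x) *\<^sub>R DG x)" if "continuous_on (closure \<Omega>s) a" for a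
    using L2v_on_indicator_scaleR_grad_Gpot[OF \<Omega> \<Omega>s charges DG that] .
  from f show ?thesis
  proof
    assume "f = (\<lambda>x. (indicator \<Omega>s x * (epsm - epss x)) *\<^sub>R DG x)"
    then show ?thesis using DG_L2[of "\<lambda>x. epsm - epss x"] epss by (simp add: continuous_intros)
  next
    assume f: "f = (\<lambda>x. (- (indicator \<Omega>m x * epsm)) *\<^sub>R DuH x + (indicator \<Omega>s x * epsm) *\<^sub>R DG x)"
    have "L2v_on \<Omega> (\<lambda>x. (- (indicator \<Omega>m x * epsm)) *\<^sub>R DuH x)"
      using DuH sets_lebesgue_open[OF \<Omega>m]
      by (intro L2v_on_scaleR_bounded[OF \<Omega>_sets, where C="\<bar>epsm\<bar>"]) (auto simp: indicator_def)
    from L2v_on_add_scaled[OF \<Omega>_sets this DG_L2[of "\<lambda>x. epsm"], of 1] show ?thesis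
      unfolding f by simp
  qed
qed

lemma set_integrable_Bfun_at_minimizer:
  fixes \<Omega> A :: "'a::euclidean_space set"
  assumes \<Omega>: "open \<Omega>" "bounded \<Omega>" and A: "open A" "A \<subseteq> \<Omega>"
    and w: "continuous_on A w" "\<And>x. x \<in> A \<Longrightarrow> \<bar>w x\<bar> \<le> W"
    and B: "B = Bfun e0 kB T N M \<xi> A"
    and u: "has_trace \<Omega> u g"
      "\<forall>v Dv. H1_grad \<Omega> v Dv \<and> has_trace \<Omega> v g \<longrightarrow> Jfun \<Omega> eps B w f u Du \<le> Jfun \<Omega> eps B w f v Dv"
  shows "set_integrable lebesgue \<Omega> (\<lambda>x. B x (u x + w x))"
proof -
  obtain h Dh where h: "H1_grad \<Omega> h Dh" "has_trace \<Omega> h g" "continuous_on (closure \<Omega>) h"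
    using has_trace_continuous_representative[OF u(1)] by blast
  have "compact (closure \<Omega>)" using \<Omega>(2) by (simp add: compact_closure)
  then obtain H where H: "\<And>x. x \<in> closure \<Omega> \<Longrightarrow> norm (h x) \<le> H"
    using h(3) compact_imp_bounded_on by blast
  have "set_integrable lebesgue \<Omega> (\<lambda>x. B x (h x + w x))"
    unfolding B Bfun_eq_exp_sum
  proof (rule set_integrable_indicator_exp_sum[OF \<Omega> A(1)])
    show "continuous_on A (\<lambda>x. h x + w x)"
      using A(2) closure_subset by (intro continuous_intros continuous_on_subset[OF h(3)] w(1)) auto
    show "\<bar>h x + w x\<bar> \<le> H + W" if "x \<in> A" for x
    proof -
      have "x \<in> closure \<Omega>" using A(2) that closure_subset by blast
      then show ?thesis using H[of x] w(2)[OF that] abs_triangle_ineq[of "h x" "w x"] by simp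
    qed
  qed
  moreover have "Jfun \<Omega> eps B w f u Du \<le> Jfun \<Omega> eps B w f h Dh" using u(2) h(1,2) by blast
  ultimately show ?thesis using Jfun_le_imp_set_integrable by blast
qed

lemma Euler_Lagrange_Bfun:
  fixes \<Omega> A :: "'a::euclidean_space set"
  assumes \<Omega>: "open \<Omega>" "bounded \<Omega>" and A: "open A" "A \<subseteq> \<Omega>"
    and w: "continuous_on A w" "\<And>x. x \<in> A \<Longrightarrow> \<bar>w x\<bar> \<le> W"
    and M: "\<forall>j<N. 0 < M j" and kBT: "0 < kB" "0 < T"
    and eps: "set_borel_measurable lebesgue \<Omega> eps" "\<And>x. x \<in> \<Omega> \<Longrightarrow> \<bar>eps x\<bar> \<le> C"
    and f: "L2v_on \<Omega> f"
    and u: "H1_grad \<Omega> u Du" "has_trace \<Omega> u g"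
      "\<forall>v Dv. H1_grad \<Omega> v Dv \<and> has_trace \<Omega> v g \<longrightarrow>
         Jfun \<Omega> eps (Bfun e0 kB T N M \<xi> A) w f u Du \<le> Jfun \<Omega> eps (Bfun e0 kB T N M \<xi> A) w f v Dv"
    and v: "H10_grad \<Omega> v Dv" "Linf_on \<Omega> v"
  shows "set_integrable lebesgue \<Omega> (\<lambda>x. bfun e0 kB T N M \<xi> A x (u x + w x) * v x) \<and>
    (LINT x:\<Omega>|lebesgue. eps x * (Du x \<bullet> Dv x))
      + (LINT x:\<Omega>|lebesgue. bfun e0 kB T N M \<xi> A x (u x + w x) * v x)
      = (LINT x:\<Omega>|lebesgue. f x \<bullet> Dv x)"
proof -
  have \<Omega>_sets: "\<Omega> \<in> sets lebesgue" using \<Omega>(1) by (rule sets_lebesgue_open)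
  define Tj where "Tj j x = 4 * pi * e0\<^sup>2 / (kB * T) * M j * indicator A x * exp (- \<xi> j * (u x + w x))"
    for j x
  have Tj_meas: "Tj j \<in> borel_measurable lebesgue" for j
  proof -
    have "(\<lambda>x. indicator A x *\<^sub>R exp (- \<xi> j * w x)) \<in> borel_measurable lebesgue"
      using A(1) w(1) by (intro indicator_continuous_measurable continuous_intros) (auto simp: borel_open)
    moreover have "u \<in> borel_measurable lebesgue" using u(1) unfolding H1_grad_def L2_on_def by blast
    moreover have "Tj j = (\<lambda>x. 4 * pi * e0\<^sup>2 / (kB * T) * M j
                              * (indicator A x *\<^sub>R exp (- \<xi> j * w x)) * exp (- \<xi> j * u x))"
      unfolding Tj_def by (simp add: algebra_simps flip: exp_add)
    ultimately show ?thesis by simp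
  qed
  have Tj_nonneg: "0 \<le> Tj j x" if "j < N" for j x
    unfolding Tj_def using kBT M that by (intro mult_nonneg_nonneg divide_nonneg_nonneg) auto
  have vH: "H1_grad \<Omega> v Dv" using v(1) unfolding H10_grad_def by blast
  show ?thesis
  proof (rule Euler_Lagrange_equation[where N=N and \<xi>=\<xi> and T=Tj,
                                       OF \<Omega>_sets Tj_meas Tj_nonneg _ _ eps f u(1) vH v(2)])
    show "Bfun e0 kB T N M \<xi> A x (u x + w x + y) = (\<Sum>j<N. Tj j x * exp (- \<xi> j * y))"
      and "bfun e0 kB T N M \<xi> A x (u x + w x) = - (\<Sum>j<N. \<xi> j * Tj j x)" for x y
      unfolding Tj_def Bfun_eq_exp_sum bfun_eq_exp_sum by (simp_all add: algebra_simps flip: exp_add)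
    show "set_integrable lebesgue \<Omega> (\<lambda>x. Bfun e0 kB T N M \<xi> A x (u x + w x))"
      by (rule set_integrable_Bfun_at_minimizer[OF \<Omega> A w refl u(2,3)])
    show "Jfun \<Omega> eps (Bfun e0 kB T N M \<xi> A) w f u Du
      \<le> Jfun \<Omega> eps (Bfun e0 kB T N M \<xi> A) w f (\<lambda>x. u x + t * v x) (\<lambda>x. Du x + t *\<^sub>R Dv x)" for t
      using u H1_grad_add_scaled[OF \<Omega>_sets u(1) vH] has_trace_add_H10[OF \<Omega>_sets u(2,1) v(1)]
      by blast
  qed
qed

theorem proposition4p3:
  fixes \<Omega> \<Omega>m \<Omega>s \<Omega>ions :: "'a::euclidean_space set"
    and epsm :: real and epss eps :: "'a \<Rightarrow> real" and g\<Omega> :: "'a \<Rightarrow> real"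
    and e0 kB T :: real
    and Nm :: nat and xs :: "nat \<Rightarrow> 'a" and z :: "nat \<Rightarrow> real"
    and Nions :: nat and M \<xi> :: "nat \<Rightarrow> real"
    and b B :: "'a \<Rightarrow> real \<Rightarrow> real" and G :: "'a \<Rightarrow> real" and DG :: "'a \<Rightarrow> 'a"
    and uH :: "'a \<Rightarrow> real" and DuH :: "'a \<Rightarrow> 'a"
    and w :: "'a \<Rightarrow> real" and f :: "'a \<Rightarrow> 'a" and gbar :: "'a \<Rightarrow> real"
    and u :: "'a \<Rightarrow> real" and Du :: "'a \<Rightarrow> 'a"
  assumes dim: "DIM('a) = 2 \<or> DIM('a) = 3"
    and \<Omega>: "open \<Omega>" "bounded \<Omega>" "lipschitz_boundary \<Omega>"
    and \<Omega>m: "open \<Omega>m" "closure \<Omega>m \<subseteq> \<Omega>" "C1_boundary \<Omega>m"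
    and \<Omega>s_def: "\<Omega>s = \<Omega> - closure \<Omega>m"
    and \<Omega>ions: "open \<Omega>ions" "\<Omega>ions \<subseteq> \<Omega>s"
    and epsm_pos: "epsm > 0"
    and epss_lip: "\<exists>L. L-lipschitz_on (closure \<Omega>s) epss"
    and epss_pos: "\<exists>c>0. \<forall>x\<in>closure \<Omega>s. epss x \<ge> c"
    and eps_def: "eps = (\<lambda>x. if x \<in> \<Omega>m then epsm else epss x)"
    and g\<Omega>_lip: "\<exists>L. L-lipschitz_on (frontier \<Omega>) g\<Omega>"
    and phys_pos: "e0 > 0" "kB > 0" "T > 0"
    and xs_in: "\<forall>i<Nm. xs i \<in> \<Omega>m"
    and M_pos: "\<forall>j<Nions. M j > 0"
    and \<xi>_nz: "\<forall>j<Nions. \<xi> j \<noteq> 0"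
    and b_def: "b = bfun e0 kB T Nions M \<xi> \<Omega>ions"
    and B_def: "B = Bfun e0 kB T Nions M \<xi> \<Omega>ions"
    and G_def: "G = Gpot e0 kB T epsm Nm xs z"
    and DG: "\<forall>x\<in>\<Omega>s. (G has_derivative (\<lambda>h. DG x \<bullet> h)) (at x)"
    and uH: "H1_grad \<Omega> uH DuH"
            "AE x in lebesgue. x \<in> \<Omega>s \<longrightarrow> uH x = - G x"
            "has_trace \<Omega>m uH (\<lambda>x. - G x)"
            "\<forall>v Dv. H10_grad \<Omega>m v Dv \<longrightarrow> (LINT x:\<Omega>m|lebesgue. DuH x \<bullet> Dv x) = 0"
    and splitting:
      "(w = G \<and> f = (\<lambda>x. (indicator \<Omega>s x * (epsm - epss x)) *\<^sub>R DG x)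
              \<and> gbar = (\<lambda>x. g\<Omega> x - G x))
       \<or> (w = (\<lambda>x. 0)
              \<and> f = (\<lambda>x. (- (indicator \<Omega>m x * epsm)) *\<^sub>R DuH x + (indicator \<Omega>s x * epsm) *\<^sub>R DG x)
              \<and> gbar = g\<Omega>)"
    and u_min: "H1_grad \<Omega> u Du" "has_trace \<Omega> u gbar"
               "\<forall>v Dv. H1_grad \<Omega> v Dv \<and> has_trace \<Omega> v gbar \<longrightarrow>
                   Jfun \<Omega> eps B w f u Du \<le> Jfun \<Omega> eps B w f v Dv"
  shows "(\<forall>v. test_fun \<Omega> v \<longrightarrow>
            set_integrable lebesgue \<Omega> (\<lambda>x. b x (u x + w x) * v x) \<and>
            (LINT x:\<Omega>|lebesgue. eps x * (Du x \<bullet> cgrad v x))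
              + (LINT x:\<Omega>|lebesgue. b x (u x + w x) * v x)
              = (LINT x:\<Omega>|lebesgue. f x \<bullet> cgrad v x))
       \<and> (\<forall>v Dv. H10_grad \<Omega> v Dv \<and> Linf_on \<Omega> v \<longrightarrow>
            set_integrable lebesgue \<Omega> (\<lambda>x. b x (u x + w x) * v x) \<and>
            (LINT x:\<Omega>|lebesgue. eps x * (Du x \<bullet> Dv x))
              + (LINT x:\<Omega>|lebesgue. b x (u x + w x) * v x)
              = (LINT x:\<Omega>|lebesgue. f x \<bullet> Dv x))"
proof -
  \<comment> \<open>The lower bound on \<open>epss\<close>, the boundary regularity of \<open>\<Omega>\<close>, the data \<open>g\<Omega>\<close> and the
    equation for \<open>uH\<close> matter only for the existence of the minimizer; they are not used here.\<close>
  have \<Omega>s: "open \<Omega>s" "bounded \<Omega>s" "\<Omega>ions \<subseteq> \<Omega>" "\<Omega>ions \<subseteq> closure \<Omega>s"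
    using \<Omega>(1,2) \<Omega>ions(2) closure_subset[of \<Omega>s] \<Omega>s_def by (auto intro: bounded_subset)
  have "\<Omega>m \<inter> closure \<Omega>s = {}"
    using \<Omega>m(1) closure_subset unfolding \<Omega>s_def by (auto simp: open_Int_closure_eq_empty)
  then have charges: "closure \<Omega>s \<inter> xs ` {..<Nm} = {}" using xs_in by blast
  have epss: "continuous_on (closure \<Omega>s) epss" using epss_lip lipschitz_on_continuous_on by blast
  obtain C where eps: "set_borel_measurable lebesgue \<Omega> eps" "\<And>x. x \<in> \<Omega> \<Longrightarrow> \<bar>eps x\<bar> \<le> C"
    using piecewise_coefficient_bounded_measurable[OF \<Omega>(1,2) \<Omega>m(1,3), of epss epsm] epss
    unfolding eps_def \<Omega>s_def by blast
  have f_L2: "L2v_on \<Omega> f"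
    using L2v_on_source_term[OF \<Omega>(1,2) \<Omega>m(1) \<Omega>s(1,2) charges DG[unfolded G_def] epss] uH(1) splitting
    unfolding H1_grad_def by blast
  obtain W where w: "continuous_on \<Omega>ions w" "\<And>x. x \<in> \<Omega>ions \<Longrightarrow> \<bar>w x\<bar> \<le> W"
  proof -
    obtain K where "continuous_on (closure \<Omega>s) G" "\<And>x. x \<in> closure \<Omega>s \<Longrightarrow> \<bar>G x\<bar> \<le> K"
      using Gpot_continuous_bounded_on[OF _ charges] \<Omega>s(2) compact_closure unfolding G_def by blast
    then show thesis
      using splitting that[of K] that[of 0] continuous_on_subset[of _ G \<Omega>ions] \<Omega>s(4) by auto
  qed
  have "set_integrable lebesgue \<Omega> (\<lambda>x. b x (u x + w x) * v x) \<and>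
      (LINT x:\<Omega>|lebesgue. eps x * (Du x \<bullet> Dv x)) + (LINT x:\<Omega>|lebesgue. b x (u x + w x) * v x)
        = (LINT x:\<Omega>|lebesgue. f x \<bullet> Dv x)"
    if "H10_grad \<Omega> v Dv" "Linf_on \<Omega> v" for v Dv
    using Euler_Lagrange_Bfun[OF \<Omega>(1,2) \<Omega>ions(1) \<Omega>s(3) w M_pos phys_pos(2,3) eps f_L2 u_min(1,2)
        u_min(3)[unfolded B_def] that]
    unfolding b_def .
  then show ?thesis using test_fun_H10_grad test_fun_Linf_on by blast
qed

end
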